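(* For every $m\geq 0$ the following three families of objects are in bijection: (i) rooted bicolored chord diagrams with $m$ chords; (ii) bicolored ordered matchings of size $2m$; (iii) pairs $(\mathcal M_\bullet,S)$ where $\mathcal M_\bullet$ is a rooted map with $m$ edges (up to isomorphism of rooted maps) and $S$ is a quasi-tree of $\mathcal M_\bullet$.
   Context: A map is a triple $\mathcal M=(B,\sigma,\alpha)$ with $B$ finite, $\sigma,\alpha\in\mathrm{Sym}(B)$, $\alpha$ a fixed-point-free involution, $\langle\sigma,\alpha\rangle$ transitive on $B$. Edges are the cycles of $\alpha$; $\underline b=\{b,\alpha(b)\}$. A rooted map is a pair $(\mathcal M,b_\bullet)$ with $b_\bullet\in B$; rooted maps $(B,\sigma,\alpha,b_\bullet)$, $(B',\sigma',\alpha',b'_\bullet)$ are isomorphic if there is a bijection $\phi:B\to B'$ with $\sigma'=\phi\sigma\phi^{-1}$, $\alpha'=\phi\alpha\phi^{-1}$, $\phi(b_\bullet)=b'_\bullet$ (pairs $(\mathcal M_\bullet,S)$ are taken up to such isomorphisms, carrying $S$ along). The tour of a set $F$ of edges is $\tau$ with $\tau(b)=\sigma(\alpha(b))$ if $\underline b\in F$ and $\tau(b)=\sigma(b)$ otherwise; a quasi-tree is a set of edges whose tour is a single cycle on $B$. A chord diagram with $m$ chords is a set of $2m$ points on a circle partitioned into $m$ pairs (chords); it is bicolored if each chord has color $1$ or $2$, and rooted if one of the $2m$ points is distinguished; rooted bicolored chord diagrams are considered up to orientation-preserving homeomorphisms of the circle respecting chords, colors and root. A bicolored ordered matching of size $2m$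 is a perfect matching of $\{1,\dots,2m\}$ each of whose $m$ pairs is colored $1$ or $2$. *)

theory Defs
  imports "HOL-Analysis.Analysis"
begin

definition unit_circle :: "complex set" where
  "unit_circle = {z. cmod z = 1}"

definition orient_pres_circle_homeo :: "(complex \<Rightarrow> complex) \<Rightarrow> bool" where
  "orient_pres_circle_homeo h \<longleftrightarrow>
     (\<exists>h'. homeomorphism unit_circle unit_circle h h') \<and>
     (\<exists>f::real \<Rightarrow> real. continuous_on UNIV f \<and> strict_mono f \<and> (\<forall>t. f (t + 1) = f t + 1) \<and>
        (\<forall>t. h (cis (2 * pi * t)) = cis (2 * pi * f t)))"

text \<open>A chord diagram: a set of chords (2-point subsets of the circle) each with a colour
  in {1,2}, plus a root (one of the points; None only when there are no chords).\<close>
type_synonym chord_diagram = "(complex set \<times> nat) set \<times> complex option"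

definition rbcd_wf :: "nat \<Rightarrow> chord_diagram \<Rightarrow> bool" where
  "rbcd_wf m D \<longleftrightarrow> (case D of (C, r) \<Rightarrow>
     finite C \<and> card C = m \<and>
     (\<forall>(c, k) \<in> C. c \<subseteq> unit_circle \<and> card c = 2 \<and> k \<in> {1, 2}) \<and>
     (\<forall>p \<in> C. \<forall>q \<in> C. p \<noteq> q \<longrightarrow> fst p \<inter> fst q = {}) \<and>
     (case r of None \<Rightarrow> C = {} | Some x \<Rightarrow> x \<in> \<Union>(fst ` C)))"

definition rbcd_iso :: "chord_diagram \<Rightarrow> chord_diagram \<Rightarrow> bool" where
  "rbcd_iso D D' \<longleftrightarrow> (case D of (C, r) \<Rightarrow> case D' of (C', r') \<Rightarrow>
     (\<exists>h. orient_pres_circle_homeo h \<and> C' = (\<lambda>(c, k). (h ` c, k)) ` C \<and> r' = map_option h r))"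

definition rooted_bicolored_chord_diagrams :: "nat \<Rightarrow> chord_diagram set set" where
  "rooted_bicolored_chord_diagrams m =
     {{D'. rbcd_wf m D' \<and> rbcd_iso D D'} | D. rbcd_wf m D}"

definition bicolored_ordered_matchings :: "nat \<Rightarrow> (nat set \<times> nat) set set" where
  "bicolored_ordered_matchings m =
     {M. finite M \<and>
         (\<forall>(p, k) \<in> M. p \<subseteq> {1..2*m} \<and> card p = 2 \<and> k \<in> {1, 2}) \<and>
         (\<forall>p \<in> M. \<forall>q \<in> M. p \<noteq> q \<longrightarrow> fst p \<inter> fst q = {}) \<and>
         \<Union>(fst ` M) = {1..2*m}}"

definition is_map :: "nat set \<Rightarrow> (nat \<Rightarrow> nat) \<Rightarrow> (nat \<Rightarrow> nat) \<Rightarrow> bool" where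
  "is_map B \<sigma> \<alpha> \<longleftrightarrow> finite B \<and> \<sigma> permutes B \<and> \<alpha> permutes B \<and>
     (\<forall>b \<in> B. \<alpha> b \<noteq> b \<and> \<alpha> (\<alpha> b) = b) \<and>
     (\<forall>b \<in> B. \<forall>b' \<in> B. (b, b') \<in> ({(x, \<sigma> x) | x. x \<in> B} \<union> {(x, \<alpha> x) | x. x \<in> B})\<^sup>*)"

definition map_edges :: "nat set \<Rightarrow> (nat \<Rightarrow> nat) \<Rightarrow> nat set set" where
  "map_edges B \<alpha> = {{b, \<alpha> b} | b. b \<in> B}"

definition tour :: "(nat \<Rightarrow> nat) \<Rightarrow> (nat \<Rightarrow> nat) \<Rightarrow> nat set set \<Rightarrow> nat \<Rightarrow> nat" where
  "tour \<sigma> \<alpha> F b = (if {b, \<alpha> b} \<in> F then \<sigma> (\<alpha> b) else \<sigma> b)"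

definition is_quasi_tree :: "nat set \<Rightarrow> (nat \<Rightarrow> nat) \<Rightarrow> (nat \<Rightarrow> nat) \<Rightarrow> nat set set \<Rightarrow> bool" where
  "is_quasi_tree B \<sigma> \<alpha> S \<longleftrightarrow> S \<subseteq> map_edges B \<alpha> \<and>
     (\<forall>b \<in> B. \<forall>b' \<in> B. \<exists>n. (tour \<sigma> \<alpha> S ^^ n) b = b')"

type_synonym map_qt = "nat set \<times> (nat \<Rightarrow> nat) \<times> (nat \<Rightarrow> nat) \<times> nat option \<times> nat set set"

definition rmqt_wf :: "nat \<Rightarrow> map_qt \<Rightarrow> bool" where
  "rmqt_wf m X \<longleftrightarrow> (case X of (B, \<sigma>, \<alpha>, r, S) \<Rightarrow>
     is_map B \<sigma> \<alpha> \<and> card B = 2 * m \<and>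
     (case r of None \<Rightarrow> B = {} | Some b \<Rightarrow> b \<in> B) \<and>
     is_quasi_tree B \<sigma> \<alpha> S)"

definition rmqt_iso :: "map_qt \<Rightarrow> map_qt \<Rightarrow> bool" where
  "rmqt_iso X X' \<longleftrightarrow> (case X of (B, \<sigma>, \<alpha>, r, S) \<Rightarrow> case X' of (B', \<sigma>', \<alpha>', r', S') \<Rightarrow>
     (\<exists>\<phi>. bij_betw \<phi> B B' \<and> (\<forall>b \<in> B. \<sigma>' (\<phi> b) = \<phi> (\<sigma> b) \<and> \<alpha>' (\<phi> b) = \<phi> (\<alpha> b)) \<and>
        r' = map_option \<phi> r \<and> S' = (\<lambda>e. \<phi> ` e) ` S))"

definition rooted_maps_with_quasi_tree :: "nat \<Rightarrow> map_qt set set" where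
  "rooted_maps_with_quasi_tree m =
     {{X'. rmqt_wf m X' \<and> rmqt_iso X X'} | X. rmqt_wf m X}"

end

theory Submission
  imports Defs "HOL-Combinatorics.Cycles"
begin

lemma bij_betw_classes_of_complete_invariant:
  assumes read_in: "\<And>X. P X \<Longrightarrow> \<rho> X \<in> T"
    and complete: "\<And>X Y. P X \<Longrightarrow> P Y \<Longrightarrow> R X Y \<longleftrightarrow> \<rho> X = \<rho> Y"
    and surj: "\<And>M. M \<in> T \<Longrightarrow> \<exists>X. P X \<and> \<rho> X = M"
  shows "\<exists>g. bij_betw g {{Y. P Y \<and> R X Y} | X. P X} T"
proof -
  define cls where "cls X = {Y. P Y \<and> R X Y}" for X
  have cls_eq: "cls X = {Y. P Y \<and> \<rho> Y = \<rho> X}" if "P X" for X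
    unfolding cls_def using complete[OF that] by auto
  define g where "g K = \<rho> (SOME X. X \<in> K)" for K
  have g_cls: "g (cls X) = \<rho> X" if "P X" for X
  proof -
    have "X \<in> cls X" using cls_eq[OF that] that by simp
    then have "(SOME Y. Y \<in> cls X) \<in> cls X" by (rule someI)
    then show ?thesis unfolding g_def using cls_eq[OF that] by simp
  qed
  have "bij_betw g (cls ` {X. P X}) T"
  proof (rule bij_betw_imageI)
    show "inj_on g (cls ` {X. P X})"
    proof (rule inj_onI)
      fix K L assume "K \<in> cls ` {X. P X}" "L \<in> cls ` {X. P X}" "g K = g L"
      then obtain X Y where "P X" "K = cls X" "P Y" "L = cls Y" "g (cls X) = g (cls Y)" by blast
      then show "K = L" using g_cls cls_eq by metis
    qed
    show "g ` cls ` {X. P X} = T"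
      using g_cls read_in surj by (force simp: image_image)
  qed
  moreover have "{{Y. P Y \<and> R X Y} | X. P X} = cls ` {X. P X}"
    unfolding cls_def by auto
  ultimately show ?thesis by auto
qed

definition rank :: "('a \<Rightarrow> 'b::linorder) \<Rightarrow> 'a set \<Rightarrow> 'a \<Rightarrow> nat" where
  "rank g P z = Suc (card {w \<in> P. g w < g z})"

lemma rank_less_rank:
  assumes "finite P" "w \<in> P" "z \<in> P" "g w < g z"
  shows "rank g P w < rank g P z"
proof -
  have "{v \<in> P. g v < g w} \<subset> {v \<in> P. g v < g z}" using assms by auto
  then show ?thesis unfolding rank_def using assms(1) by (simp add: psubset_card_mono)
qed

lemma rank_less_rank_iff:
  assumes "finite P" "inj_on g P" "w \<in> P" "z \<in> P"
  shows "rank g P w < rank g P z \<longleftrightarrow> g w < g z"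
  using rank_less_rank[OF assms(1,3,4)] rank_less_rank[OF assms(1,4,3)] inj_onD[OF assms(2) _ assms(3,4)]
  by (metis less_asym' linorder_neqE)

lemma bij_betw_rank:
  assumes "finite P" "inj_on g P"
  shows "bij_betw (rank g P) P {1..card P}"
proof -
  have inj: "inj_on (rank g P) P"
    by (rule inj_onI) (metis assms rank_less_rank_iff inj_onD linorder_neqE less_irrefl)
  have "card {w \<in> P. g w < g z} < card P" if "z \<in> P" for z
    using that assms(1) by (intro psubset_card_mono) auto
  then have "rank g P ` P \<subseteq> {1..card P}" by (auto simp: rank_def Suc_le_eq)
  moreover have "card (rank g P ` P) = card {1..card P}" using card_image[OF inj] by simp
  ultimately show ?thesis
    using inj by (simp add: bij_betw_def card_subset_eq)
qed

lemma rank_image: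
  assumes "inj_on \<psi> P" "z \<in> P"
    and "\<And>w. w \<in> P \<Longrightarrow> g' (\<psi> w) < g' (\<psi> z) \<longleftrightarrow> g w < g z"
  shows "rank g' (\<psi> ` P) (\<psi> z) = rank g P z"
proof -
  have "{w' \<in> \<psi> ` P. g' w' < g' (\<psi> z)} = \<psi> ` {w \<in> P. g w < g z}"
    using assms(3) by auto
  moreover have "inj_on \<psi> {w \<in> P. g w < g z}" using assms(1) by (rule inj_on_subset) auto
  ultimately show ?thesis unfolding rank_def by (simp add: card_image)
qed

lemma rank_least:
  assumes "\<And>w. w \<in> P \<Longrightarrow> g z \<le> g w"
  shows "rank g P z = 1"
proof -
  have none_below: "{w \<in> P. g w < g z} = {}" using assms by (auto simp: not_less[symmetric])
  show ?thesis unfolding rank_def none_below by simp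
qed

lemma rank_atLeastAtMost:
  assumes "j \<in> {1..n}"
  shows "rank id {1..n} j = j"
proof -
  have "{i \<in> {1..n}. id i < j} = {1..<j}" using assms by auto
  then show ?thesis using assms by (simp add: rank_def)
qed

lemma rank_enumeration:
  assumes "finite P" "inj_on g P"
  obtains e where "bij_betw e {..<card P} P" "\<And>j. j < card P \<Longrightarrow> rank g P (e j) = Suc j"
    "strict_mono_on {..<card P} (g \<circ> e)"
proof -
  define e where "e j = the_inv_into P (rank g P) (Suc j)" for j
  note bij = bij_betw_rank[OF assms]
  have "bij_betw Suc {..<card P} {1..card P}"
    by (simp add: bij_betw_def image_Suc_lessThan)
  from bij_betw_trans[OF this bij_betw_the_inv_into[OF bij]]
  have e_bij: "bij_betw e {..<card P} P"
    unfolding e_def by (simp add: comp_def)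
  have e_rank: "rank g P (e j) = Suc j" if "j < card P" for j
    unfolding e_def using that bij by (intro f_the_inv_into_f_bij_betw) auto
  have "strict_mono_on {..<card P} (g \<circ> e)"
  proof (rule strict_mono_onI)
    fix i j assume "i \<in> {..<card P}" "j \<in> {..<card P}" "i < j"
    moreover have "e i \<in> P" "e j \<in> P" using e_bij calculation by (auto simp: bij_betw_def)
    ultimately show "(g \<circ> e) i < (g \<circ> e) j"
      using rank_less_rank_iff[OF assms, of "e i" "e j"] e_rank[of i] e_rank[of j] by simp
  qed
  with e_bij e_rank show ?thesis using that by blast
qed

definition bicolored_matching_on :: "'a set \<Rightarrow> ('a set \<times> nat) set \<Rightarrow> bool" where
  "bicolored_matching_on Q M \<longleftrightarrow> finite M \<and>
     (\<forall>(p, k) \<in> M. p \<subseteq> Q \<and> card p = 2 \<and> k \<in> {1, 2}) \<and>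
     (\<forall>u \<in> M. \<forall>v \<in> M. u \<noteq> v \<longrightarrow> fst u \<inter> fst v = {}) \<and> \<Union>(fst ` M) = Q"

lemma bicolored_ordered_matchings_eq:
  "bicolored_ordered_matchings m = {M. bicolored_matching_on {1..2*m} M}"
  unfolding bicolored_ordered_matchings_def bicolored_matching_on_def by blast

lemma bicolored_matching_onD:
  assumes "bicolored_matching_on Q M"
  shows "finite M" "\<And>u. u \<in> M \<Longrightarrow> fst u \<subseteq> Q \<and> card (fst u) = 2 \<and> snd u \<in> {1, 2}"
    "\<And>u v. u \<in> M \<Longrightarrow> v \<in> M \<Longrightarrow> u \<noteq> v \<Longrightarrow> fst u \<inter> fst v = {}"
    "\<Union>(fst ` M) = Q"
  using assms unfolding bicolored_matching_on_def by (blast, force, blast, blast)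

lemma card_bicolored_matching_on:
  assumes "bicolored_matching_on Q M"
  shows "finite Q" "card Q = 2 * card M"
proof -
  note M = bicolored_matching_onD[OF assms]
  have fin: "finite p" and two: "card p = 2" if "p \<in> fst ` M" for p
    using that M(2) by (auto intro: card_ge_0_finite)
  have "inj_on fst M"
    using M(3) two by (intro inj_onI) (fastforce simp: card_2_iff)
  moreover have "pairwise disjnt (fst ` M)"
    using M(3) by (fastforce simp: pairwise_def disjnt_def)
  ultimately have "card (\<Union>(fst ` M)) = 2 * card M"
    by (simp add: card_Union_disjoint fin two card_image)
  then show "card Q = 2 * card M" using M(4) by simp
  show "finite Q" using M(1,4) fin by auto
qed

definition map_chords :: "('a \<Rightarrow> 'b) \<Rightarrow> ('a set \<times> nat) set \<Rightarrow> ('b set \<times> nat) set" where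
  "map_chords f M = (\<lambda>(p, k). (f ` p, k)) ` M"

lemma mem_map_chords: "u \<in> map_chords f M \<longleftrightarrow> (\<exists>p k. (p, k) \<in> M \<and> u = (f ` p, k))"
  unfolding map_chords_def by force

lemma Union_fst_map_chords: "\<Union>(fst ` map_chords f M) = f ` \<Union>(fst ` M)"
proof -
  have "fst ` map_chords f M = (\<lambda>p. f ` p) ` fst ` M"
    by (simp add: map_chords_def image_image case_prod_beta)
  then show ?thesis by (simp add: image_UN)
qed

lemma map_chords_id [simp]: "map_chords id M = M"
  by (simp add: map_chords_def)

lemma map_chords_comp: "map_chords g (map_chords f M) = map_chords (g \<circ> f) M"
  by (force simp: map_chords_def image_comp)

lemma map_chords_cong:
  assumes "bicolored_matching_on Q M" "\<And>x. x \<in> Q \<Longrightarrow> f x = g x"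
  shows "map_chords f M = map_chords g M"
proof -
  have "f ` fst u = g ` fst u" if "u \<in> M" for u
    using bicolored_matching_onD(2)[OF assms(1) that] assms(2) by (intro image_cong) auto
  then show ?thesis unfolding map_chords_def by (intro image_cong refl) (simp add: case_prod_beta)
qed

lemma bicolored_matching_on_map_chords:
  assumes M: "bicolored_matching_on Q M" and inj: "inj_on f Q"
  shows "bicolored_matching_on (f ` Q) (map_chords f M)"
  unfolding bicolored_matching_on_def
proof (intro conjI ballI impI; (elim imageE)?)
  note M' = bicolored_matching_onD[OF M]
  show "finite (map_chords f M)" using M'(1) by (simp add: map_chords_def)
  show "case u of (p, k) \<Rightarrow> p \<subseteq> f ` Q \<and> card p = 2 \<and> k \<in> {1, 2}"
    if u: "u \<in> map_chords f M" for u
  proof -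
    obtain p k where "(p, k) \<in> M" "u = (f ` p, k)" using u by (auto simp: mem_map_chords)
    then show ?thesis using M'(2) card_image[OF inj_on_subset[OF inj]] by fastforce
  qed
  show "fst u \<inter> fst v = {}" if uv: "u \<in> map_chords f M" "v \<in> map_chords f M" "u \<noteq> v" for u v
  proof -
    obtain p k p' k' where pk: "(p, k) \<in> M" "u = (f ` p, k)" "(p', k') \<in> M" "v = (f ` p', k')"
      using uv(1,2) by (auto simp: mem_map_chords)
    then have "p \<inter> p' = {}" using M'(3)[OF pk(1,3)] uv(3) by auto
    moreover have "p \<subseteq> Q" "p' \<subseteq> Q" using M'(2) pk(1,3) by fastforce+
    ultimately show ?thesis using pk inj_on_image_Int[OF inj, of p p'] by simp
  qed
  show "\<Union>(fst ` map_chords f M) = f ` Q"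
    using M'(4) by (simp add: Union_fst_map_chords)
qed

lemma map_chords_the_inv_into:
  assumes "bicolored_matching_on Q M" "inj_on f Q"
  shows "map_chords (the_inv_into Q f) (map_chords f M) = M"
proof -
  have "map_chords (the_inv_into Q f) (map_chords f M) = map_chords id M"
    unfolding map_chords_comp using assms by (intro map_chords_cong) (auto simp: the_inv_into_f_f)
  then show ?thesis by simp
qed

lemma map_chords_eq_iff:
  assumes "bicolored_matching_on Q M" "bicolored_matching_on Q M'" "inj_on f Q"
  shows "map_chords f M = map_chords f M' \<longleftrightarrow> M = M'"
proof
  assume "map_chords f M = map_chords f M'"
  then have "map_chords (the_inv_into Q f) (map_chords f M) =
      map_chords (the_inv_into Q f) (map_chords f M')" by (rule arg_cong)
  then show "M = M'"
    unfolding map_chords_the_inv_into[OF assms(1,3)] map_chords_the_inv_into[OF assms(2,3)] .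
qed simp

lemma card_map_chords:
  assumes "bicolored_matching_on Q M" "inj_on f Q"
  shows "card (map_chords f M) = card M"
proof -
  have "inj_on (\<lambda>(p, k). (f ` p, k)) M"
  proof (rule inj_onI)
    fix u v assume "u \<in> M" "v \<in> M" and eq: "(\<lambda>(p, k). (f ` p, k)) u = (\<lambda>(p, k). (f ` p, k)) v"
    then have "fst u \<subseteq> Q" "fst v \<subseteq> Q"
      using bicolored_matching_onD(2)[OF assms(1)] by auto
    with eq show "u = v" using inj_on_image_eq_iff[OF assms(2)] by (simp add: case_prod_beta prod_eq_iff)
  qed
  then show ?thesis by (simp add: map_chords_def card_image)
qed

definition turn :: "real \<Rightarrow> complex" where
  "turn t = cis (2 * pi * t)"

lemma turn_add: "turn (s + t) = turn s * turn t"
  by (simp add: turn_def distrib_left cis_mult)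

lemma norm_turn [simp]: "cmod (turn t) = 1"
  by (simp add: turn_def)

lemma turn_in_unit_circle [simp]: "turn t \<in> unit_circle"
  by (simp add: unit_circle_def)

lemma turn_eq_1_iff: "turn t = 1 \<longleftrightarrow> t \<in> \<int>"
proof -
  have "turn t = 1 \<longleftrightarrow> (\<exists>n::int. 2 * pi * t = of_int (2 * n) * pi)"
    by (simp add: turn_def cis_conv_exp exp_eq_1)
  also have "\<dots> \<longleftrightarrow> (\<exists>n::int. t = of_int n)"
    by (intro ex_cong1) auto
  finally show ?thesis by (auto simp: Ints_def)
qed

lemma turn_eq_turn_iff: "turn s = turn t \<longleftrightarrow> s - t \<in> \<int>"
proof -
  have "turn s = turn (s - t) * turn t" by (simp flip: turn_add)
  moreover have "turn t \<noteq> 0" using norm_turn[of t] by (metis norm_zero zero_neq_one)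
  ultimately show ?thesis by (simp flip: turn_eq_1_iff)
qed

lemma turn_Arg2pi: "z \<in> unit_circle \<Longrightarrow> turn (Arg2pi z / (2 * pi)) = z"
  using complex_norm_eq_1_exp by (simp add: unit_circle_def turn_def cis_conv_exp)

lemma isCont_turn: "isCont turn t"
  unfolding turn_def cis_conv_exp by (intro continuous_intros)

definition arc :: "complex \<Rightarrow> complex \<Rightarrow> real" where
  "arc x z = Arg2pi (z / x) / (2 * pi)"

lemma arc_nonneg: "0 \<le> arc x z"
  using Arg2pi_ge_0 by (simp add: arc_def)

lemma arc_less_1: "arc x z < 1"
  using Arg2pi_lt_2pi[of "z / x"] by (simp add: arc_def)

lemma mult_turn_arc:
  assumes "x \<in> unit_circle" "z \<in> unit_circle"
  shows "x * turn (arc x z) = z"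
proof -
  have "z / x \<in> unit_circle" using assms by (simp add: unit_circle_def norm_divide)
  then have "turn (arc x z) = z / x" unfolding arc_def by (rule turn_Arg2pi)
  moreover have "x \<noteq> 0" using assms(1) by (auto simp: unit_circle_def)
  ultimately show ?thesis by simp
qed

lemma arc_mult_turn:
  assumes "x \<in> unit_circle" "0 \<le> s" "s < 1"
  shows "arc x (x * turn s) = s"
proof -
  have "x \<noteq> 0" using assms(1) by (auto simp: unit_circle_def)
  moreover have "Arg2pi (turn s) = 2 * pi * s"
    by (rule Arg2pi_unique[where r = 1]) (use assms in \<open>auto simp: turn_def cis_conv_exp\<close>)
  ultimately show ?thesis by (simp add: arc_def)
qed

lemma arc_self: "x \<in> unit_circle \<Longrightarrow> arc x x = 0"
  using arc_mult_turn[of x 0] by (simp add: turn_def)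

lemma inj_on_arc: "x \<in> unit_circle \<Longrightarrow> inj_on (arc x) unit_circle"
  by (metis inj_onI mult_turn_arc)

definition circle_lift :: "(real \<Rightarrow> real) \<Rightarrow> bool" where
  "circle_lift f \<longleftrightarrow> continuous_on UNIV f \<and> strict_mono f \<and> (\<forall>t. f (t + 1) = f t + 1)"

lemma circle_lift_add_of_int:
  assumes "circle_lift f"
  shows "f (t + of_int k) = f t + of_int k"
proof -
  have step: "f (t + 1) = f t + 1" for t using assms by (simp add: circle_lift_def)
  have nat: "f (t + of_nat n) = f t + of_nat n" for t n
  proof (induction n arbitrary: t)
    case (Suc n)
    have "f (t + of_nat (Suc n)) = f ((t + 1) + of_nat n)" by (simp add: algebra_simps)
    also have "\<dots> = f t + of_nat (Suc n)" using Suc step by simp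
    finally show ?case .
  qed simp
  show ?thesis
  proof (cases "k \<ge> 0")
    case True
    then show ?thesis using nat[of t "nat k"] by simp
  next
    case False
    then show ?thesis using nat[of "t + of_int k" "nat (- k)"] by simp
  qed
qed

lemma circle_lift_add_Ints: "circle_lift f \<Longrightarrow> k \<in> \<int> \<Longrightarrow> f (t + k) = f t + k"
  by (auto elim!: Ints_cases simp: circle_lift_add_of_int)

lemma circle_lift_turn: "circle_lift f \<Longrightarrow> turn s = turn t \<Longrightarrow> turn (f s) = turn (f t)"
  unfolding turn_eq_turn_iff by (metis add_diff_cancel_left' circle_lift_add_Ints diff_add_cancel)

lemma isCont_circle_lift: "circle_lift f \<Longrightarrow> isCont f t"
  by (simp add: circle_lift_def continuous_on_eq_continuous_at)

lemma circle_lift_surj: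
  assumes "circle_lift f"
  shows "\<exists>t. f t = y"
proof -
  define n where "n = \<lceil>y - f 0\<rceil>"
  have "f (of_int (n - 1)) = f 0 + of_int (n - 1)" "f (of_int n) = f 0 + of_int n"
    using circle_lift_add_of_int[OF assms, of 0] by (metis add_0)+
  then have "f (of_int (n - 1)) \<le> y" "y \<le> f (of_int n)"
    using ceiling_correct[of "y - f 0"] unfolding n_def by linarith+
  then show ?thesis
    using IVT[of f "of_int (n - 1)" y "of_int n"] isCont_circle_lift[OF assms] by auto
qed

lemma circle_lift_shift:
  assumes "circle_lift f"
  shows "circle_lift (\<lambda>t. \<beta> + f (t - \<alpha>))"
  unfolding circle_lift_def
proof (intro conjI allI)
  have "isCont (\<lambda>t. f (t - \<alpha>)) t" for t
    by (rule isCont_o2[OF _ isCont_circle_lift[OF assms]]) (intro continuous_intros)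
  then show "continuous_on UNIV (\<lambda>t. \<beta> + f (t - \<alpha>))"
    by (intro continuous_at_imp_continuous_on ballI continuous_intros) auto
  show "strict_mono (\<lambda>t. \<beta> + f (t - \<alpha>))"
    using assms by (auto simp: circle_lift_def strict_mono_def)
  show "\<beta> + f (t + 1 - \<alpha>) = \<beta> + f (t - \<alpha>) + 1" for t
  proof -
    have "f (t + 1 - \<alpha>) = f ((t - \<alpha>) + 1)" by (rule arg_cong[where f = f]) simp
    also have "\<dots> = f (t - \<alpha>) + 1" using assms by (simp add: circle_lift_def)
    finally show ?thesis by simp
  qed
qed

definition circle_map :: "(real \<Rightarrow> real) \<Rightarrow> complex \<Rightarrow> complex" where
  "circle_map f z = turn (f (Arg2pi z / (2 * pi)))"

lemma circle_map_turn: "circle_lift f \<Longrightarrow> circle_map f (turn t) = turn (f t)"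
  unfolding circle_map_def by (rule circle_lift_turn) (auto simp: turn_Arg2pi)

lemma circle_map_Arg:
  assumes "circle_lift f" "z \<in> unit_circle"
  shows "circle_map f z = turn (f (Arg z / (2 * pi)))"
proof -
  have "cmod z = 1" using assms(2) by (simp add: unit_circle_def)
  moreover from this have "z \<noteq> 0" by auto
  ultimately have "turn (Arg z / (2 * pi)) = z"
    using Arg_eq[of z] by (simp add: turn_def cis_conv_exp)
  moreover have "turn (Arg2pi z / (2 * pi)) = z" using assms(2) by (rule turn_Arg2pi)
  ultimately show ?thesis unfolding circle_map_def using circle_lift_turn[OF assms(1)] by metis
qed

lemma continuous_on_circle_map:
  assumes f: "circle_lift f"
  shows "continuous_on unit_circle (circle_map f)"
proof -
  have cont: "isCont (\<lambda>z. turn (f (A z / (2 * pi)))) z" if "isCont A z" for A z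
  proof -
    have "isCont (\<lambda>z. A z / (2 * pi)) z" by (rule isCont_divide[OF that continuous_const]) simp
    then show ?thesis by (rule isCont_o2[OF isCont_o2[OF _ isCont_circle_lift[OF f]] isCont_turn])
  qed
  have "continuous (at z within unit_circle) (circle_map f)" if z: "z \<in> unit_circle" for z
  proof (cases "z \<in> \<real>\<^sub>\<ge>\<^sub>0")
    case False
    have "isCont (circle_map f) z"
      unfolding circle_map_def by (rule cont[OF continuous_at_Arg2pi[OF False]])
    then show ?thesis by (rule continuous_at_imp_continuous_within)
  next
    case True
    have "z \<noteq> 0" using z by (auto simp: unit_circle_def)
    with True have "z \<notin> \<real>\<^sub>\<le>\<^sub>0"
      by (auto simp: complex_nonneg_Reals_iff complex_nonpos_Reals_iff complex_eq_iff)
    then have "continuous (at z within unit_circle) (\<lambda>z. turn (f (Arg z / (2 * pi))))"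
      by (rule continuous_at_imp_continuous_within[OF cont[OF continuous_at_Arg]])
    then show ?thesis
      by (rule continuous_transform_within[OF _ zero_less_one z]) (simp add: circle_map_Arg[OF f])
  qed
  then show ?thesis by (simp add: continuous_on_eq_continuous_within)
qed

lemma circle_map_image:
  assumes "circle_lift f"
  shows "circle_map f ` unit_circle = unit_circle"
proof
  show "circle_map f ` unit_circle \<subseteq> unit_circle" by (auto simp: circle_map_def)
  show "unit_circle \<subseteq> circle_map f ` unit_circle"
  proof
    fix w assume "w \<in> unit_circle"
    moreover obtain t where "f t = Arg2pi w / (2 * pi)" using circle_lift_surj[OF assms] by blast
    ultimately have "circle_map f (turn t) = w" by (simp add: circle_map_turn[OF assms] turn_Arg2pi)
    then show "w \<in> circle_map f ` unit_circle" by (metis turn_in_unit_circle image_eqI)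
  qed
qed

lemma inj_on_circle_map:
  assumes f: "circle_lift f"
  shows "inj_on (circle_map f) unit_circle"
proof
  fix z w assume "z \<in> unit_circle" "w \<in> unit_circle" and eq: "circle_map f z = circle_map f w"
  then obtain s t where z: "z = turn s" and w: "w = turn t" by (metis turn_Arg2pi)
  then have "f s - f t \<in> \<int>" using eq by (simp add: circle_map_turn[OF f] turn_eq_turn_iff)
  then have "f s = f (t + (f s - f t))" using circle_lift_add_Ints[OF f] by simp
  then have "s = t + (f s - f t)"
    using f by (simp add: circle_lift_def strict_mono_eq)
  then have "s - t = f s - f t" by simp
  then show "z = w" unfolding z w turn_eq_turn_iff using \<open>f s - f t \<in> \<int>\<close> by simp
qed

lemma orient_pres_circle_homeo_circle_map:
  assumes "circle_lift f"
  shows "orient_pres_circle_homeo (circle_map f)"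
  unfolding orient_pres_circle_homeo_def
proof
  have "unit_circle = sphere 0 1" by (auto simp: unit_circle_def)
  then have "compact unit_circle" by (metis compact_sphere)
  then show "\<exists>h'. homeomorphism unit_circle unit_circle (circle_map f) h'"
    by (rule homeomorphism_compact[OF _ continuous_on_circle_map[OF assms] circle_map_image[OF assms]
          inj_on_circle_map[OF assms]])
  have "circle_map f (cis (2 * pi * t)) = cis (2 * pi * f t)" for t
    using circle_map_turn[OF assms] by (simp add: turn_def)
  with assms show "\<exists>g. continuous_on UNIV g \<and> strict_mono g \<and> (\<forall>t. g (t + 1) = g t + 1) \<and>
      (\<forall>t. circle_map f (cis (2 * pi * t)) = cis (2 * pi * g t))"
    unfolding circle_lift_def by (intro exI[of _ f]) simp
qed

lemma orient_pres_circle_homeoE: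
  assumes "orient_pres_circle_homeo h"
  obtains f where "circle_lift f" "\<And>t. h (turn t) = turn (f t)"
proof -
  from assms obtain f where "continuous_on UNIV f" "strict_mono f" "\<forall>t. f (t + 1) = f t + 1"
    "\<forall>t. h (cis (2 * pi * t)) = cis (2 * pi * f t)"
    unfolding orient_pres_circle_homeo_def by blast
  then show thesis using that unfolding circle_lift_def turn_def by blast
qed

lemma inj_on_orient_pres_circle_homeo:
  "orient_pres_circle_homeo h \<Longrightarrow> inj_on h unit_circle"
  unfolding orient_pres_circle_homeo_def homeomorphism_def by (metis inj_on_inverseI)

lemma arc_lifted:
  assumes f: "circle_lift f" and h: "\<And>t. h (turn t) = turn (f t)" and w: "w \<in> unit_circle"
  shows "arc (h (turn \<theta>)) (h w) = f (\<theta> + arc (turn \<theta>) w) - f \<theta>"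
proof -
  define s where "s = arc (turn \<theta>) w"
  have w_eq: "w = turn (\<theta> + s)"
    using mult_turn_arc[of "turn \<theta>" w] w by (simp add: s_def turn_add)
  have mono: "strict_mono f" and per: "f (\<theta> + 1) = f \<theta> + 1" using f by (auto simp: circle_lift_def)
  have "f \<theta> \<le> f (\<theta> + s)" using arc_nonneg[of "turn \<theta>" w] mono
    by (simp add: s_def strict_mono_less_eq)
  moreover have "f (\<theta> + s) < f (\<theta> + 1)" using arc_less_1[of "turn \<theta>" w] mono
    by (simp add: s_def strict_mono_less)
  ultimately have "arc (turn (f \<theta>)) (turn (f \<theta>) * turn (f (\<theta> + s) - f \<theta>)) = f (\<theta> + s) - f \<theta>"
    using per by (intro arc_mult_turn) auto
  then have "arc (h (turn \<theta>)) (h w) = f (\<theta> + s) - f \<theta>" by (simp add: h w_eq flip: turn_add)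
  then show ?thesis by (simp add: s_def)
qed

lemma rank_arc_image:
  assumes h: "orient_pres_circle_homeo h" and P: "P \<subseteq> unit_circle" "x \<in> P" "z \<in> P"
  shows "rank (arc (h x)) (h ` P) (h z) = rank (arc x) P z"
proof -
  obtain f where f: "circle_lift f" "\<And>t. h (turn t) = turn (f t)"
    by (metis orient_pres_circle_homeoE[OF h])
  define \<theta> where "\<theta> = Arg2pi x / (2 * pi)"
  have x: "x = turn \<theta>" using P by (auto simp: \<theta>_def turn_Arg2pi)
  have mono: "strict_mono f" using f(1) by (simp add: circle_lift_def)
  show ?thesis
  proof (rule rank_image)
    show "inj_on h P" using inj_on_orient_pres_circle_homeo[OF h] P(1) by (rule inj_on_subset)
    show "arc (h x) (h w) < arc (h x) (h z) \<longleftrightarrow> arc x w < arc x z" if "w \<in> P" for w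
    proof -
      have "w \<in> unit_circle" "z \<in> unit_circle" using that P by auto
      then show ?thesis
        unfolding x arc_lifted[OF f \<open>w \<in> unit_circle\<close>] arc_lifted[OF f \<open>z \<in> unit_circle\<close>]
        by (simp add: strict_mono_less[OF mono])
    qed
  qed fact
qed

definition clamp01 :: "real \<Rightarrow> real" where
  "clamp01 u = max 0 (min 1 u)"

definition pl_interp :: "(nat \<Rightarrow> real) \<Rightarrow> (nat \<Rightarrow> real) \<Rightarrow> nat \<Rightarrow> real \<Rightarrow> real" where
  "pl_interp a b n t =
     b 0 + (\<Sum>i<n. (b (Suc i) - b i) * clamp01 ((t - a i) / (a (Suc i) - a i)))"

lemma continuous_on_pl_interp: "continuous_on UNIV (pl_interp a b n)"
  unfolding pl_interp_def clamp01_def divide_inverse by (intro continuous_intros)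

lemma pl_interp_knot:
  assumes a: "strict_mono_on {..n} a" and "j \<le> n"
  shows "pl_interp a b n (a j) = b j"
proof -
  have "(b (Suc i) - b i) * clamp01 ((a j - a i) / (a (Suc i) - a i)) =
        (if i < j then b (Suc i) - b i else 0)" if i: "i < n" for i
  proof -
    have gap: "a i < a (Suc i)" using a i by (simp add: strict_mono_on_def)
    show ?thesis
    proof (cases "i < j")
      case True
      then have "a (Suc i) \<le> a j" using a \<open>j \<le> n\<close> by (simp add: strict_mono_on_leD)
      then show ?thesis using True gap by (simp add: clamp01_def field_simps)
    next
      case False
      then have "a j \<le> a i" using a i by (simp add: strict_mono_on_leD)
      then show ?thesis using False gap by (simp add: clamp01_def divide_nonpos_pos)
    qed
  qed
  then have "pl_interp a b n (a j) = b 0 + (\<Sum>i<n. if i < j then b (Suc i) - b i else 0)"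
    unfolding pl_interp_def by simp
  also have "(\<Sum>i<n. if i < j then b (Suc i) - b i else 0) = (\<Sum>i\<in>{..<n} \<inter> {i. i < j}. b (Suc i) - b i)"
    by (simp add: sum.inter_restrict)
  also have "{..<n} \<inter> {i. i < j} = {..<j}" using \<open>j \<le> n\<close> by auto
  also have "b 0 + (\<Sum>i<j. b (Suc i) - b i) = b j" by (simp add: sum_lessThan_telescope)
  finally show ?thesis .
qed

lemma clamp01_mono: "u \<le> v \<Longrightarrow> clamp01 u \<le> clamp01 v"
  by (simp add: clamp01_def)

lemma clamp01_strict_mono: "0 \<le> u \<Longrightarrow> u < 1 \<Longrightarrow> u < v \<Longrightarrow> clamp01 u < clamp01 v"
  by (simp add: clamp01_def)

lemma exists_segment:
  fixes a :: "nat \<Rightarrow> real"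
  shows "a 0 \<le> s \<Longrightarrow> s < a n \<Longrightarrow> \<exists>i<n. a i \<le> s \<and> s < a (Suc i)"
proof (induction n)
  case (Suc n)
  then show ?case by (cases "s < a n") (auto intro: less_SucI)
qed simp

lemma pl_interp_strict_mono:
  assumes a: "strict_mono_on {..n} a" and b: "strict_mono_on {..n} b"
  shows "strict_mono_on {a 0..a n} (pl_interp a b n)"
proof (rule strict_mono_onI)
  fix s t assume s: "s \<in> {a 0..a n}" and t: "t \<in> {a 0..a n}" and "s < t"
  let ?g = "\<lambda>t i. (b (Suc i) - b i) * clamp01 ((t - a i) / (a (Suc i) - a i))"
  have gaps: "a i < a (Suc i)" "b i < b (Suc i)" if "i < n" for i
    using a b that by (simp_all add: strict_mono_on_def)
  obtain i where i: "i < n" "a i \<le> s" "s < a (Suc i)"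
    using exists_segment[of a s n] s t \<open>s < t\<close> by auto
  have "?g s j \<le> ?g t j" if "j < n" for j
    using gaps[OF that] \<open>s < t\<close> by (intro mult_left_mono clamp01_mono divide_right_mono) auto
  moreover have "?g s i < ?g t i"
  proof -
    have "(s - a i) / (a (Suc i) - a i) < 1" "0 \<le> (s - a i) / (a (Suc i) - a i)"
      "(s - a i) / (a (Suc i) - a i) < (t - a i) / (a (Suc i) - a i)"
      using i gaps[OF i(1)] \<open>s < t\<close> by (simp_all add: divide_strict_right_mono)
    then show ?thesis using gaps[OF i(1)] by (intro mult_strict_left_mono clamp01_strict_mono) auto
  qed
  ultimately show "pl_interp a b n s < pl_interp a b n t"
    unfolding pl_interp_def using i(1) by (intro add_strict_left_mono sum_strict_mono_ex1) auto
qed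

lemma circle_lift_frac_extension:
  assumes cont: "continuous_on UNIV F" and mono: "strict_mono_on {0..1} F"
    and F0: "F 0 = 0" and F1: "F 1 = 1"
  shows "circle_lift (\<lambda>t. of_int \<lfloor>t\<rfloor> + F (frac t))"
proof -
  define f where "f t = of_int \<lfloor>t\<rfloor> + F (frac t)" for t
  have F_range: "0 \<le> F u" "F u < 1" if "0 \<le> u" "u < 1" for u
    using mono that F0 F1 strict_mono_onD[OF mono, of u 1] strict_mono_on_leD[OF mono, of 0 u] by auto
  have "isCont f x" for x
  proof -
    define n where "n = \<lfloor>x\<rfloor>"
    define G where "G t = of_int n + F (max (t - of_int n) 0) + F (min (t - of_int n + 1) 1) - 1" for t
    \<comment> \<open>on the two unit intervals meeting at the integer \<open>n\<close>, \<open>G\<close> agrees with \<open>f\<close>\<close>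
    have "continuous_on UNIV G"
      unfolding G_def by (intro continuous_intros continuous_on_compose2[OF cont]) auto
    then have "isCont G x" by (simp add: continuous_on_eq_continuous_at)
    moreover have "0 < min (x - (of_int n - 1)) (of_int n + 1 - x)" unfolding n_def by linarith
    moreover have "G t = f t" if "dist t x < min (x - (of_int n - 1)) (of_int n + 1 - x)" for t
    proof (cases "t < of_int n")
      case True
      with that have "\<lfloor>t\<rfloor> = n - 1" by (simp add: dist_real_def floor_eq_iff) linarith
      then have fl: "real_of_int \<lfloor>t\<rfloor> = of_int n - 1" by simp
      have "f t = of_int n - 1 + F (t - of_int n + 1)"
        unfolding f_def frac_def fl by (simp add: algebra_simps)
      with True show ?thesis by (simp add: G_def F0)
    next
      case False
      with that have "\<lfloor>t\<rfloor> = n" by (simp add: dist_real_def floor_eq_iff) linarith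
      with False show ?thesis by (simp add: G_def f_def frac_def F1)
    qed
    ultimately show ?thesis by (rule continuous_transform_within[OF _ _ UNIV_I])
  qed
  moreover have "strict_mono f"
  proof (rule strict_monoI)
    fix s t :: real assume "s < t"
    show "f s < f t"
    proof (cases "\<lfloor>s\<rfloor> = \<lfloor>t\<rfloor>")
      case True
      with \<open>s < t\<close> have "frac s < frac t" by (simp add: frac_def)
      then have "F (frac s) < F (frac t)"
        using frac_ge_0 frac_lt_1 by (intro strict_mono_onD[OF mono]) (auto intro: less_imp_le)
      with True show ?thesis by (simp add: f_def)
    next
      case False
      with \<open>s < t\<close> have "\<lfloor>s\<rfloor> + 1 \<le> \<lfloor>t\<rfloor>" by (metis floor_mono less_imp_le order.not_eq_order_implies_strict zless_imp_add1_zle)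
      then show ?thesis
        using F_range[of "frac s"] F_range[of "frac t"] by (simp add: f_def frac_lt_1)
    qed
  qed
  moreover have "f (t + 1) = f t + 1" for t by (simp add: f_def frac_def)
  ultimately show ?thesis
    unfolding circle_lift_def f_def[symmetric] by (simp add: continuous_at_imp_continuous_on)
qed

lemma circle_lift_through_knots:
  fixes a b :: "nat \<Rightarrow> real"
  assumes a: "strict_mono_on {..n} a" and b: "strict_mono_on {..n} b"
    and "a 0 = 0" "b 0 = 0" "a n = 1" "b n = 1"
  obtains f where "circle_lift f" "\<And>j. j \<le> n \<Longrightarrow> f (a j) = b j"
proof
  let ?F = "pl_interp a b n"
  show "circle_lift (\<lambda>t. of_int \<lfloor>t\<rfloor> + ?F (frac t))"
    using pl_interp_strict_mono[OF a b] pl_interp_knot[OF a, of 0 b] pl_interp_knot[OF a, of n b] assms(3-6)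
    by (intro circle_lift_frac_extension continuous_on_pl_interp) auto
  show "of_int \<lfloor>a j\<rfloor> + ?F (frac (a j)) = b j" if "j \<le> n" for j
  proof (cases "j = n")
    case True
    then show ?thesis using pl_interp_knot[OF a, of 0 b] assms(3-6) by simp
  next
    case False
    with that have "0 \<le> a j" "a j < 1" using a assms(3,5) strict_mono_on_leD[OF a, of 0 j]
        strict_mono_onD[OF a, of j n] by auto
    then show ?thesis using pl_interp_knot[OF a that] by (simp add: frac_eq floor_eq_iff)
  qed
qed

lemma strict_mono_on_knots:
  fixes c :: "nat \<Rightarrow> real"
  assumes "strict_mono_on {..<n} c" "\<And>j. j < n \<Longrightarrow> c j < 1"
  shows "strict_mono_on {..n} (\<lambda>j. if j < n then c j else 1)"
proof (rule strict_mono_onI)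
  fix r s assume "r \<in> {..n}" "s \<in> {..n}" "r < s"
  then have "r < n" by simp
  then show "(if r < n then c r else 1) < (if s < n then c s else 1)"
    using assms strict_mono_onD[OF assms(1), of r s] \<open>r < s\<close> by auto
qed

lemma exists_circle_homeo_preserving_rank:
  assumes P: "finite P" "P \<subseteq> unit_circle" "x \<in> P"
    and P': "finite P'" "P' \<subseteq> unit_circle" "x' \<in> P'" and card: "card P' = card P"
  obtains h where "orient_pres_circle_homeo h"
    "\<And>z. z \<in> P \<Longrightarrow> h z \<in> P' \<and> rank (arc x') P' (h z) = rank (arc x) P z"
proof -
  define n where "n = card P"
  have inj: "inj_on (arc x) P" "inj_on (arc x') P'"
    using P P' by (meson inj_on_arc inj_on_subset subsetD)+
  obtain e where e: "bij_betw e {..<n} P" "\<And>j. j < n \<Longrightarrow> rank (arc x) P (e j) = Suc j"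
      "strict_mono_on {..<n} (arc x \<circ> e)"
    using rank_enumeration[OF P(1) inj(1)] unfolding n_def by blast
  obtain e' where e': "bij_betw e' {..<n} P'" "\<And>j. j < n \<Longrightarrow> rank (arc x') P' (e' j) = Suc j"
      "strict_mono_on {..<n} (arc x' \<circ> e')"
    using rank_enumeration[OF P'(1) inj(2)] unfolding n_def card by blast
  have "0 < n" using P by (auto simp: n_def card_gt_0_iff)
  have "e 0 = x" "e' 0 = x'"
  proof -
    have "rank (arc x) P x = 1" "rank (arc x') P' x' = 1"
      using P P' by (intro rank_least; auto simp: arc_self arc_nonneg)+
    moreover have "e 0 \<in> P" "e' 0 \<in> P'" using e(1) e'(1) \<open>0 < n\<close> by (auto simp: bij_betw_def)
    ultimately show "e 0 = x" "e' 0 = x'"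
      using e(2) e'(2) \<open>0 < n\<close> P(3) P'(3) bij_betw_imp_inj_on[OF bij_betw_rank[OF P(1) inj(1)]]
        bij_betw_imp_inj_on[OF bij_betw_rank[OF P'(1) inj(2)]]
      by (metis One_nat_def inj_onD)+
  qed
  define a where "a j = (if j < n then arc x (e j) else 1)" for j
  define b where "b j = (if j < n then arc x' (e' j) else 1)" for j
  have "strict_mono_on {..n} a" "strict_mono_on {..n} b"
    unfolding a_def b_def using e(3) e'(3) arc_less_1 by (auto intro!: strict_mono_on_knots simp: comp_def)
  moreover have "a 0 = 0" "b 0 = 0"
    using \<open>0 < n\<close> \<open>e 0 = x\<close> \<open>e' 0 = x'\<close> P(2,3) P'(2,3) by (auto simp: a_def b_def arc_self)
  moreover have "a n = 1" "b n = 1" by (simp_all add: a_def b_def)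
  ultimately obtain F where F: "circle_lift F" "\<And>j. j \<le> n \<Longrightarrow> F (a j) = b j"
    by (rule circle_lift_through_knots) blast+
  define \<theta> where "\<theta> = Arg2pi x / (2 * pi)"
  define \<theta>' where "\<theta>' = Arg2pi x' / (2 * pi)"
  have x: "x = turn \<theta>" and x': "x' = turn \<theta>'"
    using P P' by (auto simp: \<theta>_def \<theta>'_def turn_Arg2pi)
  define f where "f t = \<theta>' + F (t - \<theta>)" for t
  have f: "circle_lift f" unfolding f_def by (rule circle_lift_shift[OF F(1)])
  have h_e: "circle_map f (e j) = e' j" if "j < n" for j
  proof -
    have "e j \<in> P" "e' j \<in> P'" using e(1) e'(1) that by (auto simp: bij_betw_def)
    then have "e j = turn (\<theta> + a j)" "e' j = turn (\<theta>' + b j)"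
      using mult_turn_arc[of x "e j"] mult_turn_arc[of x' "e' j"] P P' that
      by (auto simp: a_def b_def x x' turn_add)
    then show ?thesis using F(2)[of j] that by (simp add: circle_map_turn[OF f] f_def)
  qed
  show thesis
  proof (rule that[OF orient_pres_circle_homeo_circle_map[OF f]])
    fix z assume "z \<in> P"
    then obtain j where "j < n" "z = e j" using e(1) by (auto simp: bij_betw_def)
    then show "circle_map f z \<in> P' \<and> rank (arc x') P' (circle_map f z) = rank (arc x) P z"
      using h_e e(2) e'(1,2) by (auto simp: bij_betw_def)
  qed
qed

definition chord_points :: "(complex set \<times> nat) set \<Rightarrow> complex set" where
  "chord_points C = \<Union>(fst ` C)"

lemma rbcd_wf_iff:
  "rbcd_wf m (C, r) \<longleftrightarrow> bicolored_matching_on (chord_points C) C \<and> chord_points C \<subseteq> unit_circle \<and>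
     card C = m \<and> (case r of None \<Rightarrow> C = {} | Some x \<Rightarrow> x \<in> chord_points C)"
  unfolding rbcd_wf_def bicolored_matching_on_def chord_points_def by fastforce

lemma rbcd_wfD:
  assumes "rbcd_wf m (C, r)"
  shows "bicolored_matching_on (chord_points C) C" "chord_points C \<subseteq> unit_circle" "card C = m"
    "r = None \<longleftrightarrow> C = {}" "\<And>x. r = Some x \<Longrightarrow> x \<in> chord_points C"
  using assms by (auto simp: rbcd_wf_iff chord_points_def split: option.splits)

definition chord_reading :: "chord_diagram \<Rightarrow> (nat set \<times> nat) set" where
  "chord_reading D = (case D of (C, None) \<Rightarrow> {}
     | (C, Some x) \<Rightarrow> map_chords (rank (arc x) (chord_points C)) C)"

lemma chord_reading_in_matchings:
  assumes "rbcd_wf m D"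
  shows "chord_reading D \<in> bicolored_ordered_matchings m"
proof -
  obtain C r where D: "D = (C, r)" by fastforce
  note wf = rbcd_wfD[OF assms[unfolded D]]
  show ?thesis
  proof (cases r)
    case None
    with wf have "m = 0" by auto
    with None show ?thesis
      by (simp add: D chord_reading_def bicolored_ordered_matchings_eq bicolored_matching_on_def)
  next
    case (Some x)
    let ?P = "chord_points C" and ?R = "rank (arc x) (chord_points C)"
    have "finite ?P" "card ?P = 2 * m" using card_bicolored_matching_on[OF wf(1)] wf(3) by auto
    moreover have "inj_on (arc x) ?P" using wf(2) wf(5)[OF Some] by (intro inj_on_subset[OF inj_on_arc]) auto
    ultimately have "bij_betw ?R ?P {1..2*m}" by (metis bij_betw_rank)
    then have "inj_on ?R ?P" "?R ` ?P = {1..2*m}" by (simp_all add: bij_betw_def)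
    then have "bicolored_matching_on {1..2*m} (map_chords ?R C)"
      using bicolored_matching_on_map_chords[OF wf(1)] by metis
    then show ?thesis by (simp add: D Some chord_reading_def bicolored_ordered_matchings_eq)
  qed
qed

lemma chord_reading_eq_if_iso:
  assumes "rbcd_wf m D" "rbcd_iso D D'"
  shows "chord_reading D = chord_reading D'"
proof -
  obtain C r C' r' where D: "D = (C, r)" "D' = (C', r')" by fastforce
  obtain h where h: "orient_pres_circle_homeo h" "C' = map_chords h C" "r' = map_option h r"
    using assms(2) by (auto simp: D rbcd_iso_def map_chords_def)
  note wf = rbcd_wfD[OF assms(1)[unfolded D]]
  show ?thesis
  proof (cases r)
    case None
    then show ?thesis using h(3) by (simp add: D chord_reading_def)
  next
    case (Some x)
    let ?P = "chord_points C"
    have "map_chords (rank (arc (h x)) (h ` ?P)) (map_chords h C) =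
        map_chords (rank (arc (h x)) (h ` ?P) \<circ> h) C" by (rule map_chords_comp)
    also have "\<dots> = map_chords (rank (arc x) ?P) C"
      using wf(1,2) wf(5)[OF Some] by (intro map_chords_cong) (auto simp: rank_arc_image[OF h(1)])
    finally show ?thesis
      using h Some by (simp add: D chord_reading_def chord_points_def Union_fst_map_chords)
  qed
qed

lemma circle_lift_id: "circle_lift (\<lambda>t. t)"
  by (simp add: circle_lift_def strict_mono_def)

lemma iso_if_chord_reading_eq:
  assumes wf: "rbcd_wf m D" and wf': "rbcd_wf m D'" and eq: "chord_reading D = chord_reading D'"
  shows "rbcd_iso D D'"
proof -
  obtain C r C' r' where D: "D = (C, r)" "D' = (C', r')" by fastforce
  let ?P = "chord_points C" and ?P' = "chord_points C'"
  note wf = rbcd_wfD[OF wf[unfolded D]] and wf' = rbcd_wfD[OF wf'[unfolded D]]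
  have fin: "finite ?P" "finite ?P'" and card: "card ?P = 2 * m" "card ?P' = 2 * m"
    using card_bicolored_matching_on[OF wf(1)] card_bicolored_matching_on[OF wf'(1)] wf(3) wf'(3)
    by auto
  show ?thesis
  proof (cases "m = 0")
    case True
    then have "C = {}" "C' = {}"
      using wf(3) wf'(3) bicolored_matching_onD(1)[OF wf(1)] bicolored_matching_onD(1)[OF wf'(1)]
      by simp_all
    moreover from this have "r = None" "r' = None" using wf(4) wf'(4) by simp_all
    ultimately show ?thesis
      using orient_pres_circle_homeo_circle_map[OF circle_lift_id] by (auto simp: D rbcd_iso_def)
  next
    case False
    then obtain x x' where r: "r = Some x" "r' = Some x'"
      using wf(3,4) wf'(3,4) by (cases r; cases r') auto
    then have x: "x \<in> ?P" "x' \<in> ?P'" using wf(5) wf'(5) by auto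
    obtain h where h: "orient_pres_circle_homeo h"
        "\<And>z. z \<in> ?P \<Longrightarrow> h z \<in> ?P' \<and> rank (arc x') ?P' (h z) = rank (arc x) ?P z"
      using exists_circle_homeo_preserving_rank[of ?P x ?P' x'] fin card wf(2) wf'(2) x by auto
    let ?R = "rank (arc x) ?P" and ?R' = "rank (arc x') ?P'"
    have inj_h: "inj_on h ?P" using inj_on_orient_pres_circle_homeo[OF h(1)] wf(2) by (rule inj_on_subset)
    have inj_R': "inj_on ?R' ?P'"
      using wf'(2) x by (intro bij_betw_imp_inj_on[OF bij_betw_rank] fin inj_on_subset[OF inj_on_arc]) auto
    have "h ` ?P = ?P'"
      using h(2) card_image[OF inj_h] card fin by (intro card_subset_eq) auto
    then have "bicolored_matching_on ?P' (map_chords h C)"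
      using bicolored_matching_on_map_chords[OF wf(1) inj_h] by simp
    moreover have "map_chords ?R' C' = map_chords ?R' (map_chords h C)"
    proof -
      have "map_chords ?R' C' = map_chords ?R C" using eq by (simp add: D r chord_reading_def)
      also have "\<dots> = map_chords (?R' \<circ> h) C" using wf(1) h(2) by (intro map_chords_cong) auto
      finally show ?thesis by (simp add: map_chords_comp)
    qed
    ultimately have "C' = map_chords h C" using map_chords_eq_iff[OF wf'(1) _ inj_R'] by blast
    moreover have "h x = x'"
    proof -
      have "?R' (h x) = ?R x" using h(2) x by blast
      also have "\<dots> = 1" using wf(2) x by (intro rank_least) (auto simp: arc_self arc_nonneg)
      also have "\<dots> = ?R' x'" using wf'(2) x by (intro rank_least[symmetric]) (auto simp: arc_self arc_nonneg)
      finally have "?R' (h x) = ?R' x'" .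
      then show ?thesis using inj_onD[OF inj_R'] h(2) x by blast
    qed
    ultimately show ?thesis using h(1) by (auto simp: D r rbcd_iso_def map_chords_def)
  qed
qed

lemma chord_reading_surj:
  assumes M: "M \<in> bicolored_ordered_matchings m"
  shows "\<exists>D. rbcd_wf m D \<and> chord_reading D = M"
proof -
  let ?Q = "{1..2*m}"
  have M: "bicolored_matching_on ?Q M" using M by (simp add: bicolored_ordered_matchings_eq)
  then have card_M: "card M = m" using card_bicolored_matching_on by fastforce
  show ?thesis
  proof (cases "m = 0")
    case True
    then have "M = {}" using card_M bicolored_matching_onD(1)[OF M] by simp
    with True show ?thesis by (intro exI[of _ "({}, None)"]) (simp add: rbcd_wf_def chord_reading_def)
  next
    case False
    define pt where "pt j = turn (real (j - 1) / real (2 * m))" for j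
    have arc_pt: "arc (pt 1) (pt j) = real (j - 1) / real (2 * m)" if "j \<in> ?Q" for j
      using arc_mult_turn[of 1 "real (j - 1) / real (2 * m)"] that
      by (simp add: pt_def turn_def unit_circle_def)
    have arc_pt_less: "arc (pt 1) (pt i) < arc (pt 1) (pt j) \<longleftrightarrow> i < j" if "i \<in> ?Q" "j \<in> ?Q" for i j
      unfolding arc_pt[OF that(1)] arc_pt[OF that(2)] using that False by (auto simp: divide_less_cancel)
    have inj: "inj_on pt ?Q"
      by (rule inj_onI) (metis arc_pt_less linorder_neqE_nat less_irrefl)
    have rank_pt: "rank (arc (pt 1)) (pt ` ?Q) (pt j) = j" if "j \<in> ?Q" for j
      using rank_image[OF inj that, of "arc (pt 1)" id] arc_pt_less rank_atLeastAtMost[OF that] that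
      by simp
    define C where "C = map_chords pt M"
    have points: "chord_points C = pt ` ?Q"
      by (simp add: C_def chord_points_def Union_fst_map_chords bicolored_matching_onD(4)[OF M])
    have "pt 1 \<in> pt ` ?Q" using False by simp
    then have "rbcd_wf m (C, Some (pt 1))"
      unfolding rbcd_wf_iff points using bicolored_matching_on_map_chords[OF M inj]
      by (auto simp: C_def card_map_chords[OF M inj] card_M pt_def)
    moreover have "chord_reading (C, Some (pt 1)) = M"
    proof -
      have "chord_reading (C, Some (pt 1)) = map_chords (rank (arc (pt 1)) (pt ` ?Q)) C"
        by (simp add: chord_reading_def points)
      also have "\<dots> = map_chords (rank (arc (pt 1)) (pt ` ?Q) \<circ> pt) M"
        by (simp add: C_def map_chords_comp)
      also have "\<dots> = map_chords id M" using M rank_pt by (intro map_chords_cong) auto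
      finally show ?thesis by simp
    qed
    ultimately show ?thesis by blast
  qed
qed

theorem bij_chord_diagrams_matchings:
  "\<exists>f. bij_betw f (rooted_bicolored_chord_diagrams m) (bicolored_ordered_matchings m)"
  unfolding rooted_bicolored_chord_diagrams_def
proof (rule bij_betw_classes_of_complete_invariant)
  show "chord_reading D \<in> bicolored_ordered_matchings m" if "rbcd_wf m D" for D
    using that by (rule chord_reading_in_matchings)
  show "rbcd_iso D D' \<longleftrightarrow> chord_reading D = chord_reading D'" if "rbcd_wf m D" "rbcd_wf m D'" for D D'
    using that chord_reading_eq_if_iso iso_if_chord_reading_eq by blast
  show "\<exists>D. rbcd_wf m D \<and> chord_reading D = M" if "M \<in> bicolored_ordered_matchings m" for M
    using that by (rule chord_reading_surj)
qed

locale single_orbit =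
  fixes \<tau> :: "'a \<Rightarrow> 'a" and B :: "'a set" and r :: 'a
  assumes permutes: "\<tau> permutes B" and finite: "finite B" and root: "r \<in> B"
    and reach: "\<And>b. b \<in> B \<Longrightarrow> \<exists>n. (\<tau> ^^ n) r = b"
begin

lemma bij_betw_funpow: "bij_betw (\<lambda>n. (\<tau> ^^ n) r) {..<card B} B"
  and funpow_card: "(\<tau> ^^ card B) r = r"
proof -
  have perm: "permutation \<tau>" using permutes_imp_permutation[OF finite permutes] .
  have "range (\<lambda>n. (\<tau> ^^ n) r) = B"
    using permutes_in_funpow_image[OF permutes root] reach by blast
  then have set: "set (support \<tau> r) = B" using support_set[OF perm] by simp
  moreover have dist: "distinct (support \<tau> r)" using cycle_of_permutation[OF perm] .
  ultimately have len: "least_power \<tau> r = card B" using distinct_card by fastforce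
  show "bij_betw (\<lambda>n. (\<tau> ^^ n) r) {..<card B} B"
    using dist set unfolding bij_betw_def len[symmetric] by (simp add: distinct_map atLeast0LessThan)
  show "(\<tau> ^^ card B) r = r"
    by (metis len least_power_of_permutation(1)[OF perm])
qed

lemma funpow_mod_card: "(\<tau> ^^ (n mod card B)) r = (\<tau> ^^ n) r"
  using funpow_mod_eq[OF funpow_card] .

end

definition orbit_rank :: "('a \<Rightarrow> 'a) \<Rightarrow> 'a \<Rightarrow> 'a set \<Rightarrow> 'a \<Rightarrow> nat" where
  "orbit_rank \<tau> r B b = Suc (the_inv_into {..<card B} (\<lambda>n. (\<tau> ^^ n) r) b)"

context single_orbit
begin

lemma orbit_rank_funpow: "n < card B \<Longrightarrow> orbit_rank \<tau> r B ((\<tau> ^^ n) r) = Suc n"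
  using the_inv_into_f_f[OF bij_betw_imp_inj_on[OF bij_betw_funpow]] by (simp add: orbit_rank_def)

lemma bij_betw_orbit_rank: "bij_betw (orbit_rank \<tau> r B) B {1..card B}"
proof -
  have "bij_betw Suc {..<card B} {1..card B}" by (simp add: bij_betw_def image_Suc_lessThan)
  from bij_betw_trans[OF bij_betw_the_inv_into[OF bij_betw_funpow] this]
  show ?thesis by (simp add: orbit_rank_def[abs_def] comp_def)
qed

lemma orbit_rank_root: "orbit_rank \<tau> r B r = 1"
proof -
  have "0 < card B" using root finite by (auto simp: card_gt_0_iff)
  then show ?thesis using orbit_rank_funpow[of 0] by simp
qed

lemma orbit_rank_step:
  assumes "b \<in> B"
  shows "orbit_rank \<tau> r B (\<tau> b) = orbit_rank \<tau> r B b mod card B + 1"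
proof -
  obtain n where n: "n < card B" "b = (\<tau> ^^ n) r" using bij_betw_funpow assms by (auto simp: bij_betw_def)
  then have "\<tau> b = (\<tau> ^^ (Suc n mod card B)) r" by (simp add: funpow_mod_card)
  moreover have "Suc n mod card B < card B" using n by simp
  ultimately show ?thesis using n by (simp add: orbit_rank_funpow mod_Suc)
qed

end

lemma orbit_rank_conj:
  assumes O: "single_orbit \<tau> B r" and O': "single_orbit \<tau>' B' r'" and \<phi>: "bij_betw \<phi> B B'"
    and conj: "\<And>b. b \<in> B \<Longrightarrow> \<phi> (\<tau> b) = \<tau>' (\<phi> b)" and "\<phi> r = r'" and "b \<in> B"
  shows "orbit_rank \<tau>' r' B' (\<phi> b) = orbit_rank \<tau> r B b"
proof -
  interpret O: single_orbit \<tau> B r by fact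
  interpret O': single_orbit \<tau>' B' r' by fact
  have \<phi>_funpow: "\<phi> ((\<tau> ^^ n) r) = (\<tau>' ^^ n) r'" for n
    by (induction n) (simp_all add: \<open>\<phi> r = r'\<close> conj permutes_in_funpow_image[OF O.permutes O.root])
  obtain n where n: "n < card B" "b = (\<tau> ^^ n) r"
    using O.bij_betw_funpow \<open>b \<in> B\<close> by (auto simp: bij_betw_def)
  moreover have "card B' = card B" using bij_betw_same_card[OF \<phi>] by simp
  ultimately show ?thesis
    using O.orbit_rank_funpow O'.orbit_rank_funpow \<phi>_funpow by simp
qed

definition twist :: "('a \<Rightarrow> 'a) \<Rightarrow> 'a set set \<Rightarrow> 'a \<Rightarrow> 'a" where
  "twist \<alpha> S b = (if {b, \<alpha> b} \<in> S then \<alpha> b else b)"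

lemma tour_eq: "tour \<sigma> \<alpha> S = \<sigma> \<circ> twist \<alpha> S"
  by (auto simp: tour_def twist_def)

lemma twist_twist:
  assumes "\<And>b. \<alpha> (\<alpha> b) = b"
  shows "twist \<alpha> S (twist \<alpha> S b) = b"
  using assms by (auto simp: twist_def insert_commute)

lemma twist_permutes:
  assumes "\<alpha> permutes B" "\<And>b. \<alpha> (\<alpha> b) = b"
  shows "twist \<alpha> S permutes B"
  unfolding permutes_def
proof (intro conjI allI impI)
  show "twist \<alpha> S b = b" if "b \<notin> B" for b
    using permutes_not_in[OF assms(1) that] by (simp add: twist_def)
  have "bij (twist \<alpha> S)" by (rule involuntory_imp_bij) (rule twist_twist[OF assms(2)])
  then show "\<exists>!b. twist \<alpha> S b = b'" for b' by (simp add: bij_iff)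
qed

lemma twist_conj:
  assumes "\<alpha>' (\<phi> b) = \<phi> (\<alpha> b)" "{\<phi> b, \<alpha>' (\<phi> b)} \<in> S' \<longleftrightarrow> {b, \<alpha> b} \<in> S"
  shows "twist \<alpha>' S' (\<phi> b) = \<phi> (twist \<alpha> S b)"
  using assms by (simp add: twist_def)

lemma tour_permutes:
  assumes "\<sigma> permutes B" "\<alpha> permutes B" "\<And>b. \<alpha> (\<alpha> b) = b"
  shows "tour \<sigma> \<alpha> S permutes B"
  unfolding tour_eq by (rule permutes_compose[OF twist_permutes[OF assms(2,3)] assms(1)])

lemma tour_conj_iff:
  assumes "\<And>b. \<alpha> (\<alpha> b) = b" "\<And>b. \<alpha>' (\<alpha>' b) = b" "\<alpha> permutes B"
    and "\<And>b. b \<in> B \<Longrightarrow> \<alpha>' (\<phi> b) = \<phi> (\<alpha> b)"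
    and "\<And>b. b \<in> B \<Longrightarrow> {\<phi> b, \<alpha>' (\<phi> b)} \<in> S' \<longleftrightarrow> {b, \<alpha> b} \<in> S"
  shows "(\<forall>b\<in>B. \<sigma>' (\<phi> b) = \<phi> (\<sigma> b)) \<longleftrightarrow> (\<forall>b\<in>B. tour \<sigma>' \<alpha>' S' (\<phi> b) = \<phi> (tour \<sigma> \<alpha> S b))"
proof -
  have tw: "twist \<alpha>' S' (\<phi> b) = \<phi> (twist \<alpha> S b)" if "b \<in> B" for b
    using assms(4,5)[OF that] by (rule twist_conj)
  have tw_in: "twist \<alpha> S b \<in> B" if "b \<in> B" for b
    using that permutes_in_image[OF assms(3)] by (simp add: twist_def)
  show ?thesis
  proof
    assume "\<forall>b\<in>B. \<sigma>' (\<phi> b) = \<phi> (\<sigma> b)"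
    then show "\<forall>b\<in>B. tour \<sigma>' \<alpha>' S' (\<phi> b) = \<phi> (tour \<sigma> \<alpha> S b)"
      by (simp add: tour_eq tw tw_in)
  next
    assume tour: "\<forall>b\<in>B. tour \<sigma>' \<alpha>' S' (\<phi> b) = \<phi> (tour \<sigma> \<alpha> S b)"
    have "\<sigma>' (\<phi> b) = \<phi> (\<sigma> b)" if "b \<in> B" for b
    proof -
      have "\<sigma>' (\<phi> b) = tour \<sigma>' \<alpha>' S' (twist \<alpha>' S' (\<phi> b))"
        by (simp add: tour_eq twist_twist[OF assms(2)])
      also have "\<dots> = \<phi> (tour \<sigma> \<alpha> S (twist \<alpha> S b))" using tour tw tw_in that by simp
      also have "\<dots> = \<phi> (\<sigma> b)" by (simp add: tour_eq twist_twist[OF assms(1)])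
      finally show ?thesis .
    qed
    then show "\<forall>b\<in>B. \<sigma>' (\<phi> b) = \<phi> (\<sigma> b)" by blast
  qed
qed

lemma tour_reachable:
  assumes "\<sigma> permutes B" "\<alpha> permutes B" "b \<in> B"
  shows "(b, (tour \<sigma> \<alpha> S ^^ n) b) \<in> ({(x, \<sigma> x) | x. x \<in> B} \<union> {(x, \<alpha> x) | x. x \<in> B})\<^sup>*"
  using assms(3)
proof (induction n arbitrary: b)
  case (Suc n)
  let ?E = "{(x, \<sigma> x) | x. x \<in> B} \<union> {(x, \<alpha> x) | x. x \<in> B}"
  have "\<alpha> b \<in> B" using Suc.prems permutes_in_image[OF assms(2)] by simp
  then have "(b, \<alpha> b) \<in> ?E" "(\<alpha> b, \<sigma> (\<alpha> b)) \<in> ?E" "(b, \<sigma> b) \<in> ?E" using Suc.prems by blast+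
  then have "(b, tour \<sigma> \<alpha> S b) \<in> ?E\<^sup>*"
    by (auto simp: tour_def intro: rtrancl_into_rtrancl[OF r_into_rtrancl])
  moreover have "tour \<sigma> \<alpha> S b \<in> B"
    using permutes_in_image[OF assms(1)] permutes_in_image[OF assms(2)] Suc.prems by (simp add: tour_def)
  ultimately show ?case using Suc.IH by (simp add: funpow_swap1 rtrancl_trans)
qed simp

definition colored_edges :: "'a set \<Rightarrow> ('a \<Rightarrow> 'a) \<Rightarrow> 'a set set \<Rightarrow> ('a set \<times> nat) set" where
  "colored_edges B \<alpha> S = (\<lambda>b. ({b, \<alpha> b}, if {b, \<alpha> b} \<in> S then 2 else 1)) ` B"

lemma edge_of_endpoint:
  "\<alpha> (\<alpha> b) = b \<Longrightarrow> c \<in> {b, \<alpha> b} \<Longrightarrow> {c, \<alpha> c} = {b, \<alpha> b}"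
  by auto

lemma bicolored_matching_on_colored_edges:
  assumes "finite B" "\<alpha> permutes B" "\<And>b. b \<in> B \<Longrightarrow> \<alpha> b \<noteq> b" "\<And>b. \<alpha> (\<alpha> b) = b"
  shows "bicolored_matching_on B (colored_edges B \<alpha> S)"
  unfolding bicolored_matching_on_def
proof (intro conjI ballI impI)
  have \<alpha>_in: "\<alpha> b \<in> B" if "b \<in> B" for b using that permutes_in_image[OF assms(2)] by simp
  show "finite (colored_edges B \<alpha> S)" using assms(1) by (simp add: colored_edges_def)
  have "card {b, \<alpha> b} = 2" if "b \<in> B" for b using assms(3)[OF that] by (simp add: card_insert_if)
  then show "case u of (p, k) \<Rightarrow> p \<subseteq> B \<and> card p = 2 \<and> k \<in> {1, 2}"
    if "u \<in> colored_edges B \<alpha> S" for u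
    using that \<alpha>_in by (auto simp: colored_edges_def)
  show "fst u \<inter> fst v = {}"
    if uv: "u \<in> colored_edges B \<alpha> S" "v \<in> colored_edges B \<alpha> S" "u \<noteq> v" for u v
  proof (rule ccontr)
    obtain b c where u: "u = ({b, \<alpha> b}, if {b, \<alpha> b} \<in> S then 2 else 1)"
      and v: "v = ({c, \<alpha> c}, if {c, \<alpha> c} \<in> S then 2 else 1)"
      using uv(1,2) by (auto simp: colored_edges_def)
    assume "fst u \<inter> fst v \<noteq> {}"
    then obtain x where "x \<in> {b, \<alpha> b}" "x \<in> {c, \<alpha> c}" using u v by auto
    then have "{b, \<alpha> b} = {c, \<alpha> c}" using edge_of_endpoint assms(4) by metis
    then show False using uv(3) u v by simp
  qed
  show "\<Union>(fst ` colored_edges B \<alpha> S) = B" using \<alpha>_in by (auto simp: colored_edges_def)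
qed

lemma map_chords_colored_edges_iff:
  assumes \<phi>: "bij_betw \<phi> B B'"
    and \<alpha>: "\<alpha> permutes B" "\<And>b. \<alpha> (\<alpha> b) = b"
    and \<alpha>': "\<And>b. b \<in> B' \<Longrightarrow> \<alpha>' b \<noteq> b" "\<And>b. \<alpha>' (\<alpha>' b) = b"
  shows "map_chords \<phi> (colored_edges B \<alpha> S) = colored_edges B' \<alpha>' S' \<longleftrightarrow>
    (\<forall>b\<in>B. \<alpha>' (\<phi> b) = \<phi> (\<alpha> b) \<and> ({\<phi> b, \<alpha>' (\<phi> b)} \<in> S' \<longleftrightarrow> {b, \<alpha> b} \<in> S))"
proof -
  define col where "col b = (if {b, \<alpha> b} \<in> S then 2 else 1 :: nat)" for b
  define col' where "col' b' = (if {b', \<alpha>' b'} \<in> S' then 2 else 1 :: nat)" for b'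
  have lhs: "map_chords \<phi> (colored_edges B \<alpha> S) = (\<lambda>b. ({\<phi> b, \<phi> (\<alpha> b)}, col b)) ` B"
    unfolding map_chords_def colored_edges_def image_image col_def by simp
  have "B' = \<phi> ` B" using \<phi> by (simp add: bij_betw_def)
  then have rhs: "colored_edges B' \<alpha>' S' = (\<lambda>b. ({\<phi> b, \<alpha>' (\<phi> b)}, col' (\<phi> b))) ` B"
    unfolding colored_edges_def col'_def by (simp add: image_image)
  have col_iff: "col' (\<phi> b) = col b \<longleftrightarrow> ({\<phi> b, \<alpha>' (\<phi> b)} \<in> S' \<longleftrightarrow> {b, \<alpha> b} \<in> S)" for b
    by (simp add: col_def col'_def)
  show ?thesis
  proof
    assume eq: "map_chords \<phi> (colored_edges B \<alpha> S) = colored_edges B' \<alpha>' S'"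
    show "\<forall>b\<in>B. \<alpha>' (\<phi> b) = \<phi> (\<alpha> b) \<and> ({\<phi> b, \<alpha>' (\<phi> b)} \<in> S' \<longleftrightarrow> {b, \<alpha> b} \<in> S)"
    proof
      fix b assume "b \<in> B"
      then have "({\<phi> b, \<phi> (\<alpha> b)}, col b) \<in> colored_edges B' \<alpha>' S'" using eq unfolding lhs by blast
      then obtain c where "c \<in> B" and c: "{\<phi> b, \<phi> (\<alpha> b)} = {\<phi> c, \<alpha>' (\<phi> c)}" "col b = col' (\<phi> c)"
        unfolding rhs by auto
      have "\<phi> b \<in> B'" using \<phi> \<open>b \<in> B\<close> by (auto simp: bij_betw_def)
      have edge: "{\<phi> b, \<alpha>' (\<phi> b)} = {\<phi> b, \<phi> (\<alpha> b)}"
        using c(1) edge_of_endpoint[of \<alpha>' "\<phi> c" "\<phi> b"] \<alpha>'(2) by auto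
      then have "\<alpha>' (\<phi> b) = \<phi> (\<alpha> b)" using \<alpha>'(1)[OF \<open>\<phi> b \<in> B'\<close>] by (metis doubleton_eq_iff)
      moreover have "col' (\<phi> b) = col b"
        using c edge by (simp add: col'_def)
      ultimately show "\<alpha>' (\<phi> b) = \<phi> (\<alpha> b) \<and> ({\<phi> b, \<alpha>' (\<phi> b)} \<in> S' \<longleftrightarrow> {b, \<alpha> b} \<in> S)"
        using col_iff by blast
    qed
  next
    assume conj: "\<forall>b\<in>B. \<alpha>' (\<phi> b) = \<phi> (\<alpha> b) \<and> ({\<phi> b, \<alpha>' (\<phi> b)} \<in> S' \<longleftrightarrow> {b, \<alpha> b} \<in> S)"
    have "({\<phi> b, \<phi> (\<alpha> b)}, col b) = ({\<phi> b, \<alpha>' (\<phi> b)}, col' (\<phi> b))" if "b \<in> B" for b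
    proof -
      from conj that have "\<alpha>' (\<phi> b) = \<phi> (\<alpha> b)" "{\<phi> b, \<alpha>' (\<phi> b)} \<in> S' \<longleftrightarrow> {b, \<alpha> b} \<in> S"
        by blast+
      then show ?thesis using col_iff[of b] by simp
    qed
    then show "map_chords \<phi> (colored_edges B \<alpha> S) = colored_edges B' \<alpha>' S'"
      unfolding lhs rhs by (rule image_cong[OF refl])
  qed
qed

lemma edges_in_image_iff:
  assumes \<phi>: "bij_betw \<phi> B B'" and \<alpha>: "\<alpha> permutes B" and S: "S \<subseteq> map_edges B \<alpha>"
    and S': "S' \<subseteq> map_edges B' \<alpha>'" and conj: "\<And>b. b \<in> B \<Longrightarrow> \<alpha>' (\<phi> b) = \<phi> (\<alpha> b)"
  shows "(\<forall>b\<in>B. {\<phi> b, \<alpha>' (\<phi> b)} \<in> S' \<longleftrightarrow> {b, \<alpha> b} \<in> S) \<longleftrightarrow> S' = (\<lambda>e. \<phi> ` e) ` S"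
proof -
  have \<phi>_edge: "\<phi> ` {b, \<alpha> b} = {\<phi> b, \<alpha>' (\<phi> b)}" if "b \<in> B" for b using conj[OF that] by simp
  have edge_B: "{b, \<alpha> b} \<subseteq> B" if "b \<in> B" for b using that permutes_in_image[OF \<alpha>] by simp
  have inj: "inj_on \<phi> B" using \<phi> by (rule bij_betw_imp_inj_on)
  show ?thesis
  proof
    assume iff: "\<forall>b\<in>B. {\<phi> b, \<alpha>' (\<phi> b)} \<in> S' \<longleftrightarrow> {b, \<alpha> b} \<in> S"
    show "S' = (\<lambda>e. \<phi> ` e) ` S"
    proof
      show "S' \<subseteq> (\<lambda>e. \<phi> ` e) ` S"
      proof
        fix e' assume "e' \<in> S'"
        then obtain b' where "b' \<in> B'" and e': "e' = {b', \<alpha>' b'}"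
          using S' unfolding map_edges_def by blast
        obtain b where "b \<in> B" and b': "b' = \<phi> b" using \<phi> \<open>b' \<in> B'\<close> unfolding bij_betw_def by blast
        have "{b, \<alpha> b} \<in> S" using iff \<open>b \<in> B\<close> \<open>e' \<in> S'\<close> by (simp add: e' b')
        moreover have "e' = \<phi> ` {b, \<alpha> b}" unfolding e' b' \<phi>_edge[OF \<open>b \<in> B\<close>] ..
        ultimately show "e' \<in> (\<lambda>e. \<phi> ` e) ` S" by blast
      qed
      show "(\<lambda>e. \<phi> ` e) ` S \<subseteq> S'"
      proof
        fix e' assume "e' \<in> (\<lambda>e. \<phi> ` e) ` S"
        then obtain e where "e \<in> S" and e': "e' = \<phi> ` e" by blast
        then obtain b where "b \<in> B" and e: "e = {b, \<alpha> b}" using S unfolding map_edges_def by blast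
        have "e' = {\<phi> b, \<alpha>' (\<phi> b)}" unfolding e' e \<phi>_edge[OF \<open>b \<in> B\<close>] ..
        moreover have "{b, \<alpha> b} \<in> S" using \<open>e \<in> S\<close> e by simp
        ultimately show "e' \<in> S'" using iff[rule_format, OF \<open>b \<in> B\<close>] by simp
      qed
    qed
  next
    assume S'_eq: "S' = (\<lambda>e. \<phi> ` e) ` S"
    show "\<forall>b\<in>B. {\<phi> b, \<alpha>' (\<phi> b)} \<in> S' \<longleftrightarrow> {b, \<alpha> b} \<in> S"
    proof
      fix b assume "b \<in> B"
      have "{\<phi> b, \<alpha>' (\<phi> b)} \<in> S' \<longleftrightarrow> \<phi> ` {b, \<alpha> b} \<in> (\<lambda>e. \<phi> ` e) ` S"
        using \<phi>_edge[OF \<open>b \<in> B\<close>] S'_eq by simp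
      also have "\<dots> \<longleftrightarrow> {b, \<alpha> b} \<in> S"
      proof
        assume "\<phi> ` {b, \<alpha> b} \<in> (\<lambda>e. \<phi> ` e) ` S"
        then obtain e where "e \<in> S" "\<phi> ` e = \<phi> ` {b, \<alpha> b}" by (auto simp: image_iff)
        moreover have "e \<subseteq> B" using S \<open>e \<in> S\<close> edge_B unfolding map_edges_def by blast
        ultimately show "{b, \<alpha> b} \<in> S"
          using inj_on_image_eq_iff[OF inj _ edge_B[OF \<open>b \<in> B\<close>]] by auto
      qed (rule imageI)
      finally show "{\<phi> b, \<alpha>' (\<phi> b)} \<in> S' \<longleftrightarrow> {b, \<alpha> b} \<in> S" .
    qed
  qed
qed

lemma rmqt_wfD:
  assumes "rmqt_wf m (B, \<sigma>, \<alpha>, r, S)"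
  shows "finite B" "\<sigma> permutes B" "\<alpha> permutes B" "\<And>b. b \<in> B \<Longrightarrow> \<alpha> b \<noteq> b" "\<And>b. \<alpha> (\<alpha> b) = b"
    "card B = 2 * m" "r = None \<longleftrightarrow> B = {}" "\<And>r0. r = Some r0 \<Longrightarrow> r0 \<in> B" "S \<subseteq> map_edges B \<alpha>"
    "\<And>b b'. b \<in> B \<Longrightarrow> b' \<in> B \<Longrightarrow> \<exists>n. (tour \<sigma> \<alpha> S ^^ n) b = b'"
proof -
  note wf = assms[unfolded rmqt_wf_def is_map_def is_quasi_tree_def prod.case]
  show "finite B" "\<sigma> permutes B" "\<alpha> permutes B" "\<And>b. b \<in> B \<Longrightarrow> \<alpha> b \<noteq> b" "card B = 2 * m"
    "S \<subseteq> map_edges B \<alpha>" "\<And>b b'. b \<in> B \<Longrightarrow> b' \<in> B \<Longrightarrow> \<exists>n. (tour \<sigma> \<alpha> S ^^ n) b = b'"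
    using wf by blast+
  show "\<alpha> (\<alpha> b) = b" for b
    using wf permutes_not_in[of \<alpha> B b] by (cases "b \<in> B") auto
  show "r = None \<longleftrightarrow> B = {}" "\<And>r0. r = Some r0 \<Longrightarrow> r0 \<in> B"
    using wf by (auto split: option.splits)
qed

lemma single_orbit_tour:
  assumes "rmqt_wf m (B, \<sigma>, \<alpha>, Some r, S)"
  shows "single_orbit (tour \<sigma> \<alpha> S) B r"
  using rmqt_wfD[OF assms] by unfold_locales (auto intro: tour_permutes)

definition map_reading :: "map_qt \<Rightarrow> (nat set \<times> nat) set" where
  "map_reading X = (case X of (B, \<sigma>, \<alpha>, None, S) \<Rightarrow> {}
     | (B, \<sigma>, \<alpha>, Some r, S) \<Rightarrow> map_chords (orbit_rank (tour \<sigma> \<alpha> S) r B) (colored_edges B \<alpha> S))"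

lemma map_reading_in_matchings:
  assumes "rmqt_wf m X"
  shows "map_reading X \<in> bicolored_ordered_matchings m"
proof -
  obtain B \<sigma> \<alpha> r S where X: "X = (B, \<sigma>, \<alpha>, r, S)" by (cases X) auto
  note wf = rmqt_wfD[OF assms[unfolded X]]
  show ?thesis
  proof (cases r)
    case None
    with wf have "m = 0" by simp
    with None show ?thesis
      by (simp add: X map_reading_def bicolored_ordered_matchings_eq bicolored_matching_on_def)
  next
    case (Some r0)
    interpret single_orbit "tour \<sigma> \<alpha> S" B r0
      using single_orbit_tour assms X Some by simp
    let ?R = "orbit_rank (tour \<sigma> \<alpha> S) r0 B"
    have "inj_on ?R B" "?R ` B = {1..2*m}" using bij_betw_orbit_rank wf(6) by (simp_all add: bij_betw_def)
    then have "bicolored_matching_on {1..2*m} (map_chords ?R (colored_edges B \<alpha> S))"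
      using bicolored_matching_on_map_chords[OF bicolored_matching_on_colored_edges[OF wf(1,3,4,5)]]
      by metis
    then show ?thesis by (simp add: X Some map_reading_def bicolored_ordered_matchings_eq)
  qed
qed

lemma map_reading_eq_if_iso:
  assumes wf: "rmqt_wf m X" and wf': "rmqt_wf m X'" and iso: "rmqt_iso X X'"
  shows "map_reading X = map_reading X'"
proof -
  obtain B \<sigma> \<alpha> r S where X: "X = (B, \<sigma>, \<alpha>, r, S)" by (cases X) auto
  obtain B' \<sigma>' \<alpha>' r' S' where X': "X' = (B', \<sigma>', \<alpha>', r', S')" by (cases X') auto
  obtain \<phi> where \<phi>: "bij_betw \<phi> B B'" and conj: "\<And>b. b \<in> B \<Longrightarrow> \<sigma>' (\<phi> b) = \<phi> (\<sigma> b) \<and> \<alpha>' (\<phi> b) = \<phi> (\<alpha> b)"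
    and r': "r' = map_option \<phi> r" and S': "S' = (\<lambda>e. \<phi> ` e) ` S"
    using iso unfolding X X' rmqt_iso_def prod.case by blast
  note w = rmqt_wfD[OF wf[unfolded X]] and w' = rmqt_wfD[OF wf'[unfolded X']]
  show ?thesis
  proof (cases r)
    case None
    then show ?thesis using r' by (simp add: X X' map_reading_def)
  next
    case (Some r0)
    let ?\<tau> = "tour \<sigma> \<alpha> S" and ?\<tau>' = "tour \<sigma>' \<alpha>' S'"
    have colors: "\<forall>b\<in>B. {\<phi> b, \<alpha>' (\<phi> b)} \<in> S' \<longleftrightarrow> {b, \<alpha> b} \<in> S"
      using conj by (intro iffD2[OF edges_in_image_iff[OF \<phi> w(3,9) w'(9)] S']) simp
    have edges: "map_chords \<phi> (colored_edges B \<alpha> S) = colored_edges B' \<alpha>' S'"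
      using conj colors by (intro iffD2[OF map_chords_colored_edges_iff[OF \<phi> w(3,5) w'(4,5)]]) auto
    have tours: "\<forall>b\<in>B. ?\<tau>' (\<phi> b) = \<phi> (?\<tau> b)"
      using tour_conj_iff[OF w(5) w'(5) w(3), of \<phi> S' S \<sigma>' \<sigma>] conj colors by blast
    have ranks: "(orbit_rank ?\<tau>' (\<phi> r0) B' \<circ> \<phi>) b = orbit_rank ?\<tau> r0 B b" if "b \<in> B" for b
      using single_orbit_tour wf wf' X X' Some r' \<phi> tours that
      unfolding comp_def by (intro orbit_rank_conj) auto
    have "map_reading X' = map_chords (orbit_rank ?\<tau>' (\<phi> r0) B' \<circ> \<phi>) (colored_edges B \<alpha> S)"
      by (simp add: X' Some r' map_reading_def flip: edges map_chords_comp)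
    also have "\<dots> = map_chords (orbit_rank ?\<tau> r0 B) (colored_edges B \<alpha> S)"
      by (rule map_chords_cong[OF bicolored_matching_on_colored_edges[OF w(1,3,4,5)] ranks])
    also have "\<dots> = map_reading X" by (simp add: X Some map_reading_def)
    finally show ?thesis by simp
  qed
qed

lemma iso_if_map_reading_eq:
  assumes wf: "rmqt_wf m X" and wf': "rmqt_wf m X'" and eq: "map_reading X = map_reading X'"
  shows "rmqt_iso X X'"
proof -
  obtain B \<sigma> \<alpha> r S where X: "X = (B, \<sigma>, \<alpha>, r, S)" by (cases X) auto
  obtain B' \<sigma>' \<alpha>' r' S' where X': "X' = (B', \<sigma>', \<alpha>', r', S')" by (cases X') auto
  note w = rmqt_wfD[OF wf[unfolded X]] and w' = rmqt_wfD[OF wf'[unfolded X']]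
  show ?thesis
  proof (cases "m = 0")
    case True
    then have "B = {}" "B' = {}" using w(1,6) w'(1,6) by simp_all
    moreover from this have "S = {}" "S' = {}" "r = None" "r' = None"
      using w(7,9) w'(7,9) by (auto simp: map_edges_def)
    ultimately show ?thesis using bij_betw_id by (auto simp: X X' rmqt_iso_def)
  next
    case False
    then obtain r0 r0' where r: "r = Some r0" "r' = Some r0'"
      using w(1,6,7) w'(1,6,7) by (cases r; cases r') auto
    let ?\<tau> = "tour \<sigma> \<alpha> S" and ?\<tau>' = "tour \<sigma>' \<alpha>' S'"
    interpret O: single_orbit ?\<tau> B r0 using single_orbit_tour wf X r by simp
    interpret O': single_orbit ?\<tau>' B' r0' using single_orbit_tour wf' X' r by simp
    let ?R = "orbit_rank ?\<tau> r0 B" and ?R' = "orbit_rank ?\<tau>' r0' B'"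
    have R: "bij_betw ?R B {1..2*m}" and R': "bij_betw ?R' B' {1..2*m}"
      using O.bij_betw_orbit_rank O'.bij_betw_orbit_rank w(6) w'(6) by simp_all
    define \<phi> where "\<phi> = the_inv_into B' ?R' \<circ> ?R"
    have \<phi>: "bij_betw \<phi> B B'" unfolding \<phi>_def using R bij_betw_the_inv_into[OF R'] by (rule bij_betw_trans)
    have R'_\<phi>: "?R' (\<phi> b) = ?R b" if "b \<in> B" for b
      using f_the_inv_into_f_bij_betw[OF R' bij_betw_apply[OF R that]] by (simp add: \<phi>_def)
    have "map_chords \<phi> (colored_edges B \<alpha> S) =
        map_chords (the_inv_into B' ?R') (map_chords ?R (colored_edges B \<alpha> S))"
      by (simp add: \<phi>_def map_chords_comp)
    also have "map_chords ?R (colored_edges B \<alpha> S) = map_chords ?R' (colored_edges B' \<alpha>' S')"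
      using eq by (simp add: X X' r map_reading_def)
    also have "map_chords (the_inv_into B' ?R') \<dots> = colored_edges B' \<alpha>' S'"
      using bicolored_matching_on_colored_edges[OF w'(1,3,4,5)] R'
      by (intro map_chords_the_inv_into) (simp_all add: bij_betw_def)
    finally have transport:
      "\<forall>b\<in>B. \<alpha>' (\<phi> b) = \<phi> (\<alpha> b) \<and> ({\<phi> b, \<alpha>' (\<phi> b)} \<in> S' \<longleftrightarrow> {b, \<alpha> b} \<in> S)"
      by (simp only: map_chords_colored_edges_iff[OF \<phi> w(3,5) w'(4,5)])
    have \<alpha>_conj: "\<alpha>' (\<phi> b) = \<phi> (\<alpha> b)" if "b \<in> B" for b
      using bspec[OF transport that] by (rule conjunct1)
    have colors: "{\<phi> b, \<alpha>' (\<phi> b)} \<in> S' \<longleftrightarrow> {b, \<alpha> b} \<in> S" if "b \<in> B" for b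
      using bspec[OF transport that] by (rule conjunct2)
    have S': "S' = (\<lambda>e. \<phi> ` e) ` S"
      by (intro iffD1[OF edges_in_image_iff[OF \<phi> w(3,9) w'(9) \<alpha>_conj]] ballI colors)
    \<comment> \<open>both ranks advance cyclically along their tours, so \<open>\<phi>\<close> intertwines the tours\<close>
    have "?\<tau>' (\<phi> b) = \<phi> (?\<tau> b)" if "b \<in> B" for b
    proof -
      have "\<phi> b \<in> B'" "?\<tau> b \<in> B" using that \<phi> permutes_in_image[OF O.permutes] by (auto simp: bij_betw_def)
      then have "?R' (?\<tau>' (\<phi> b)) = ?R' (\<phi> (?\<tau> b))"
        using O.orbit_rank_step O'.orbit_rank_step R'_\<phi> that w(6) w'(6) by simp
      moreover have "?\<tau>' (\<phi> b) \<in> B'" "\<phi> (?\<tau> b) \<in> B'"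
        using \<open>\<phi> b \<in> B'\<close> \<open>?\<tau> b \<in> B\<close> \<phi> permutes_in_image[OF O'.permutes] by (auto simp: bij_betw_def)
      ultimately show ?thesis using R' by (auto simp: bij_betw_def dest: inj_onD)
    qed
    then have \<sigma>_conj: "\<forall>b\<in>B. \<sigma>' (\<phi> b) = \<phi> (\<sigma> b)"
      using tour_conj_iff[OF w(5) w'(5) w(3) \<alpha>_conj colors] by blast
    have "\<phi> r0 = r0'"
    proof -
      have "?R' (\<phi> r0) = ?R' r0'" using R'_\<phi> O.root O.orbit_rank_root O'.orbit_rank_root by simp
      then show ?thesis using R' \<phi> O.root O'.root by (auto simp: bij_betw_def dest: inj_onD)
    qed
    then show ?thesis using \<phi> \<sigma>_conj \<alpha>_conj S' by (auto simp: X X' r rmqt_iso_def)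
  qed
qed

lemma bicolored_matching_on_partner:
  assumes M: "bicolored_matching_on Q M"
  obtains \<alpha> where "\<alpha> permutes Q" "\<And>b. b \<in> Q \<Longrightarrow> \<alpha> b \<noteq> b" "\<And>b. \<alpha> (\<alpha> b) = b"
    "colored_edges Q \<alpha> {p. (p, 2) \<in> M} = M"
proof -
  note M' = bicolored_matching_onD[OF M]
  have unique: "u = v" if "u \<in> M" "v \<in> M" "b \<in> fst u" "b \<in> fst v" for u v b
    using M'(3)[OF that(1,2)] that(3,4) by blast
  define chord where "chord b = (THE u. u \<in> M \<and> b \<in> fst u)" for b
  have chord_eq: "chord b = u" if "u \<in> M" "b \<in> fst u" for u b
    unfolding chord_def using that unique by blast
  have chord: "chord b \<in> M" "b \<in> fst (chord b)" if "b \<in> Q" for b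
    using that M'(4) chord_eq by fastforce+
  define \<alpha> where "\<alpha> b = (if b \<in> Q then the_elem (fst (chord b) - {b}) else b)" for b
  have edge: "fst (chord b) = {b, \<alpha> b}" "\<alpha> b \<noteq> b" if b: "b \<in> Q" for b
  proof -
    obtain x y where xy: "fst (chord b) = {x, y}" "x \<noteq> y"
      using M'(2)[OF chord(1)[OF b]] by (auto simp: card_2_iff)
    moreover have "b \<in> {x, y}" using chord(2)[OF b] xy by simp
    ultimately obtain c where c: "fst (chord b) = {b, c}" "c \<noteq> b" by auto
    then have "{b, c} - {b} = {c}" by auto
    then have "\<alpha> b = c" using b c by (simp add: \<alpha>_def)
    then show "fst (chord b) = {b, \<alpha> b}" "\<alpha> b \<noteq> b" using c by simp_all
  qed
  have \<alpha>_in: "\<alpha> b \<in> Q" if "b \<in> Q" for b using edge[OF that] M'(2)[OF chord(1)[OF that]] by auto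
  have \<alpha>\<alpha>: "\<alpha> (\<alpha> b) = b" for b
  proof (cases "b \<in> Q")
    case True
    have "chord (\<alpha> b) = chord b" by (rule chord_eq[OF chord(1)[OF True]]) (simp add: edge(1)[OF True])
    then have "{\<alpha> b, \<alpha> (\<alpha> b)} = {b, \<alpha> b}" using edge(1)[OF \<alpha>_in[OF True]] edge(1)[OF True] by simp
    then show ?thesis using edge(2)[OF \<alpha>_in[OF True]] by (metis doubleton_eq_iff)
  qed (simp add: \<alpha>_def)
  have "\<alpha> permutes Q"
    unfolding permutes_def using involuntory_imp_bij[OF \<alpha>\<alpha>] by (auto simp: \<alpha>_def bij_iff)
  moreover have "colored_edges Q \<alpha> {p. (p, 2) \<in> M} = M"
  proof -
    have "({b, \<alpha> b}, if {b, \<alpha> b} \<in> {p. (p, 2) \<in> M} then 2 else 1) = chord b" if b: "b \<in> Q" for b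
    proof -
      obtain k where k: "chord b = ({b, \<alpha> b}, k)" "k \<in> {1, 2}"
        using edge[OF b] M'(2)[OF chord(1)[OF b]] by (metis prod.collapse)
      have "({b, \<alpha> b}, 2) \<in> M \<longleftrightarrow> k = 2"
        using chord_eq[of "({b, \<alpha> b}, 2)" b] chord[OF b] k by auto
      then show ?thesis using k by auto
    qed
    then have "colored_edges Q \<alpha> {p. (p, 2) \<in> M} = chord ` Q"
      unfolding colored_edges_def by (rule image_cong[OF refl])
    also have "\<dots> = M"
    proof
      show "chord ` Q \<subseteq> M" using chord by blast
      show "M \<subseteq> chord ` Q"
      proof
        fix u assume "u \<in> M"
        then obtain b where "b \<in> fst u" using M'(2) by fastforce
        then show "u \<in> chord ` Q" using chord_eq \<open>u \<in> M\<close> M'(4) by blast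
      qed
    qed
    finally show ?thesis .
  qed
  ultimately show thesis using that edge(2) \<alpha>\<alpha> by blast
qed

definition cyc_succ :: "nat \<Rightarrow> nat \<Rightarrow> nat" where
  "cyc_succ N b = (if b \<in> {1..N} then b mod N + 1 else b)"

lemma funpow_cyc_succ:
  assumes "b \<in> {1..N}"
  shows "(cyc_succ N ^^ n) b = (b - 1 + n) mod N + 1"
proof (induction n)
  case 0
  have "b - 1 < N" using assms by auto
  then show ?case using assms by simp
next
  case (Suc n)
  have "0 < N" using assms by simp
  then have "(b - 1 + n) mod N + 1 \<in> {1..N}" by (simp add: Suc_le_eq)
  with Suc show ?case by (simp add: cyc_succ_def mod_Suc_eq)
qed

lemma cyc_succ_permutes: "cyc_succ N permutes {1..N}"
proof (rule inj_imp_permutes)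
  have "b mod N = (if b = N then 0 else b)" if "b \<in> {1..N}" for b using that by auto
  then show "inj_on (cyc_succ N) {1..N}"
    by (intro inj_onI) (auto simp: cyc_succ_def split: if_splits)
  show "cyc_succ N b \<in> {1..N}" if "b \<in> {1..N}" for b
    using that by (auto simp: cyc_succ_def Suc_le_eq)
qed (auto simp: cyc_succ_def)

lemma map_reading_surj:
  assumes "M \<in> bicolored_ordered_matchings m"
  shows "\<exists>X. rmqt_wf m X \<and> map_reading X = M"
proof -
  let ?Q = "{1..2*m}"
  have M: "bicolored_matching_on ?Q M" using assms by (simp add: bicolored_ordered_matchings_eq)
  show ?thesis
  proof (cases "m = 0")
    case True
    then have "M = {}" using card_bicolored_matching_on[OF M] bicolored_matching_onD(1)[OF M] by simp
    moreover have "rmqt_wf 0 ({}, id, id, None, {})"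
      by (simp add: rmqt_wf_def is_map_def is_quasi_tree_def map_edges_def)
    ultimately show ?thesis using True by (intro exI[of _ "({}, id, id, None, {})"]) (simp add: map_reading_def)
  next
    case False
    obtain \<alpha> where \<alpha>: "\<alpha> permutes ?Q" "\<And>b. b \<in> ?Q \<Longrightarrow> \<alpha> b \<noteq> b" "\<And>b. \<alpha> (\<alpha> b) = b"
      and edges: "colored_edges ?Q \<alpha> {p. (p, 2) \<in> M} = M"
      by (rule bicolored_matching_on_partner[OF M]) blast+
    let ?S = "{p. (p, 2) \<in> M}" and ?succ = "cyc_succ (2 * m)"
    \<comment> \<open>undoing the twist along the coloured edges makes the tour the cyclic order \<open>1, 2, \<dots>, 2m\<close>\<close>
    define \<sigma> where "\<sigma> = ?succ \<circ> twist \<alpha> ?S"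
    have tour: "tour \<sigma> \<alpha> ?S = ?succ"
      by (simp add: \<sigma>_def tour_eq fun_eq_iff twist_twist[OF \<alpha>(3)])
    have reach: "(?succ ^^ (2 * m + b' - b)) b = b'" if "b \<in> ?Q" "b' \<in> ?Q" for b b'
    proof -
      have "b - 1 + (2 * m + b' - b) = (b' - 1) + 2 * m" using that by auto
      moreover have "b' - 1 < 2 * m" using that by auto
      ultimately have "(b - 1 + (2 * m + b' - b)) mod (2 * m) = b' - 1" by simp
      then show ?thesis unfolding funpow_cyc_succ[OF that(1)] using that by simp
    qed
    have "?S \<subseteq> map_edges ?Q \<alpha>"
    proof
      fix p assume "p \<in> ?S"
      then have "(p, 2) \<in> colored_edges ?Q \<alpha> ?S" using edges by simp
      then show "p \<in> map_edges ?Q \<alpha>" by (auto simp: colored_edges_def map_edges_def)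
    qed
    moreover have \<sigma>: "\<sigma> permutes ?Q"
      unfolding \<sigma>_def by (rule permutes_compose[OF twist_permutes[OF \<alpha>(1,3)] cyc_succ_permutes])
    moreover have "(b, b') \<in> ({(x, \<sigma> x) | x. x \<in> ?Q} \<union> {(x, \<alpha> x) | x. x \<in> ?Q})\<^sup>*"
      if "b \<in> ?Q" "b' \<in> ?Q" for b b'
      using tour_reachable[OF \<sigma> \<alpha>(1) that(1), where S = ?S and n = "2 * m + b' - b"] reach[OF that] by (simp add: tour)
    moreover have "\<exists>n. (tour \<sigma> \<alpha> ?S ^^ n) b = b'" if "b \<in> ?Q" "b' \<in> ?Q" for b b'
      using reach[OF that] by (auto simp: tour)
    ultimately have wf: "rmqt_wf m (?Q, \<sigma>, \<alpha>, Some 1, ?S)"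
      using \<alpha> False by (auto simp: rmqt_wf_def is_map_def is_quasi_tree_def)
    interpret single_orbit ?succ ?Q 1 using single_orbit_tour[OF wf] by (simp add: tour)
    have rank_id: "orbit_rank ?succ 1 ?Q b = id b" if "b \<in> ?Q" for b
    proof -
      have "b - 1 < 2 * m" using that by auto
      then show ?thesis
        using orbit_rank_funpow[of "b - 1"] funpow_cyc_succ[of 1 "2 * m" "b - 1"] that by simp
    qed
    have "map_reading (?Q, \<sigma>, \<alpha>, Some 1, ?S) = map_chords (orbit_rank ?succ 1 ?Q) (colored_edges ?Q \<alpha> ?S)"
      by (simp add: map_reading_def tour)
    also have "\<dots> = map_chords id (colored_edges ?Q \<alpha> ?S)"
      by (rule map_chords_cong[OF bicolored_matching_on_colored_edges[OF _ \<alpha>] rank_id]) simp_all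
    finally show ?thesis using wf edges by (intro exI[of _ "(?Q, \<sigma>, \<alpha>, Some 1, ?S)"]) simp
  qed
qed

theorem bij_matchings_maps_with_quasi_tree:
  "\<exists>g. bij_betw g (bicolored_ordered_matchings m) (rooted_maps_with_quasi_tree m)"
proof -
  have "\<exists>f. bij_betw f (rooted_maps_with_quasi_tree m) (bicolored_ordered_matchings m)"
    unfolding rooted_maps_with_quasi_tree_def
  proof (rule bij_betw_classes_of_complete_invariant)
    show "map_reading X \<in> bicolored_ordered_matchings m" if "rmqt_wf m X" for X
      using that by (rule map_reading_in_matchings)
    show "rmqt_iso X X' \<longleftrightarrow> map_reading X = map_reading X'" if "rmqt_wf m X" "rmqt_wf m X'" for X X'
      using that map_reading_eq_if_iso iso_if_map_reading_eq by metis
    show "\<exists>X. rmqt_wf m X \<and> map_reading X = M" if "M \<in> bicolored_ordered_matchings m" for M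
      using that by (rule map_reading_surj)
  qed
  then show ?thesis using bij_betw_inv_into by blast
qed

theorem lemma12:
  fixes m :: nat
  shows "(\<exists>f. bij_betw f (rooted_bicolored_chord_diagrams m) (bicolored_ordered_matchings m)) \<and>
         (\<exists>g. bij_betw g (bicolored_ordered_matchings m) (rooted_maps_with_quasi_tree m))"
  using bij_chord_diagrams_matchings bij_matchings_maps_with_quasi_tree by blast

end
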